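(* Let $\mathcal{H}_0$ and $\mathfrak{N}$ be Hilbert spaces with $\dim\mathfrak{N}=\kappa<\infty$. Let $A_0$ be a self-adjoint operator in $\mathcal{H}_0$, $B$ a bounded operator from $\mathcal{H}_0$ into $\mathfrak{N}$, and $D$ a self-adjoint operator in $\mathfrak{N}$. Then the operator-valued function $V(z)=-\left(D+B(A_0-zI)^{-1}B^*-zI\right)^{-1}$, $z\in\mathbb{C}_+\cup\mathbb{C}_-$, belongs to the class $N^1_\kappa(R)$ in the Hilbert space $\mathfrak{N}$.
   Context: Class $N_\kappa$ (values in $[E,E]$, here $E=\mathfrak{N}$): $V$ meromorphic on $\mathbb{C}\setminus\mathbb{R}$ with domain of holomorphy $Z_V$, $V(\bar z)=V(z)^*$, such that the kernel $N_V(z,\zeta)=\frac{V(\zeta)-V(z)^*}{\zeta-\bar z}$ ($N_V(z,\bar z)=V'(z)$) has exactly $\kappa$ negative squares, i.e. all forms $\sum_{j,k}(N_V(z_j,z_k)h_j,h_k)\xi_j\bar\xi_k$ ($z_j\in Z_V$, $h_j\in E$) have at most $\kappa$ negative squares and some has exactly $\kappa$. Class $N_\kappa(R)$ ($\dim E<\infty$): $V\in N_\kappa$ with (i) $\lim_{y\uparrow\infty}(V(iy)f,f)/y=0$ $\forall f\in E$; (ii) $\bigcap_{\zeta\in Z_V}\ker N_V(\zeta,z)=\{0\}$ $\forall z\in Z_V$; (iii) $\lim_{y\uparrow\infty}V(iy)f=0$ for all $f\in\mathcal{B}=\{f\in E:\lim_{y\uparrow\infty}y(\mathrm{Im}\,V(iy)f,f)<\infty\}$.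 Subclass $N^1_\kappa(R)$: those $V\in N_\kappa(R)$ with $\mathcal{B}=E$. *)

theory Defs
  imports "HOL-Complex_Analysis.Complex_Analysis"
begin

class chilbert = real_normed_vector + complete_space +
  fixes cscale :: "complex \<Rightarrow> 'a \<Rightarrow> 'a" (infixr \<open>*\<^sub>C\<close> 75)
    and cinner :: "'a \<Rightarrow> 'a \<Rightarrow> complex"
  assumes cscale_add_right: "a *\<^sub>C (x + y) = a *\<^sub>C x + a *\<^sub>C y"
    and cscale_add_left: "(a + b) *\<^sub>C x = a *\<^sub>C x + b *\<^sub>C x"
    and cscale_cscale: "a *\<^sub>C (b *\<^sub>C x) = (a * b) *\<^sub>C x"
    and cscale_of_real: "complex_of_real r *\<^sub>C x = r *\<^sub>R x"
    and cinner_add_left: "cinner (x + y) z = cinner x z + cinner y z"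
    and cinner_cscale_left: "cinner (a *\<^sub>C x) y = a * cinner x y"
    and cinner_commute: "cinner y x = cnj (cinner x y)"
    and cinner_self_norm: "cinner x x = complex_of_real ((norm x)\<^sup>2)"

text \<open>An operator in H is given by its domain DA and its action A on DA.\<close>

definition csubspace :: "'a::chilbert set \<Rightarrow> bool" where
  "csubspace S \<longleftrightarrow> 0 \<in> S \<and> (\<forall>x\<in>S. \<forall>y\<in>S. x + y \<in> S) \<and> (\<forall>a. \<forall>x\<in>S. a *\<^sub>C x \<in> S)"

definition clinear_on :: "'a::chilbert set \<Rightarrow> ('a \<Rightarrow> 'b::chilbert) \<Rightarrow> bool" where
  "clinear_on S A \<longleftrightarrow> (\<forall>x\<in>S. \<forall>y\<in>S. A (x + y) = A x + A y) \<and> (\<forall>a. \<forall>x\<in>S. A (a *\<^sub>C x) = a *\<^sub>C A x)"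

text \<open>Self-adjoint: densely defined, linear, and A equals its adjoint A*
  (same domain, same action).\<close>
definition selfadjoint :: "'a::chilbert set \<Rightarrow> ('a \<Rightarrow> 'a) \<Rightarrow> bool" where
  "selfadjoint DA A \<longleftrightarrow> csubspace DA \<and> clinear_on DA A \<and> closure DA = UNIV
     \<and> (\<forall>y. y \<in> DA \<longleftrightarrow> (\<exists>w. \<forall>x\<in>DA. cinner (A x) y = cinner x w))
     \<and> (\<forall>x\<in>DA. \<forall>y\<in>DA. cinner (A x) y = cinner x (A y))"

definition resolvent :: "'a::chilbert set \<Rightarrow> ('a \<Rightarrow> 'a) \<Rightarrow> complex \<Rightarrow> 'a \<Rightarrow> 'a" where
  "resolvent DA A z y = (THE x. x \<in> DA \<and> A x - z *\<^sub>C x = y)"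

section \<open>The finite-dimensional space N = C^n (n a finite index type, dim = CARD('n))\<close>

definition ninner :: "complex^'n \<Rightarrow> complex^'n \<Rightarrow> complex" where
  "ninner f g = (\<Sum>i\<in>UNIV. f $ i * cnj (g $ i))"

definition cadj :: "complex^'n^'n \<Rightarrow> complex^'n^'n" where
  "cadj M = (\<chi> i j. cnj (M $ j $ i))"

definition bounded_op :: "('a::chilbert \<Rightarrow> complex^'n) \<Rightarrow> bool" where
  "bounded_op B \<longleftrightarrow> (\<forall>x y. B (x + y) = B x + B y) \<and> (\<forall>a x. B (a *\<^sub>C x) = a *s B x)
     \<and> (\<exists>K. \<forall>x. norm (B x) \<le> K * norm x)"

definition is_adjoint :: "('a::chilbert \<Rightarrow> complex^'n) \<Rightarrow> (complex^'n \<Rightarrow> 'a) \<Rightarrow> bool" where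
  "is_adjoint B Bs \<longleftrightarrow> (\<forall>x f. ninner (B x) f = cinner x (Bs f))"

definition entry :: "(complex \<Rightarrow> complex^'n^'n) \<Rightarrow> 'n \<Rightarrow> 'n \<Rightarrow> complex \<Rightarrow> complex" where
  "entry V i j = (\<lambda>w. V w $ i $ j)"

definition holdom :: "(complex \<Rightarrow> complex^'n^'n) \<Rightarrow> complex set" where
  "holdom V = {z. z \<notin> \<real> \<and> (\<forall>i j. entry V i j analytic_on {z})}"

text \<open>The kernel N_V(z, zeta); on the diagonal zeta = conj z its continuous extension V'(zeta).\<close>
definition NV :: "(complex \<Rightarrow> complex^'n^'n) \<Rightarrow> complex \<Rightarrow> complex \<Rightarrow> complex^'n^'n" where
  "NV V z \<zeta> = (if \<zeta> = cnj z then (\<chi> i j. deriv (entry V i j) \<zeta>)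
               else (\<chi> i j. (V \<zeta> $ i $ j - cnj (V z $ j $ i)) / (\<zeta> - cnj z)))"

definition kform :: "(complex \<Rightarrow> complex^'n^'n) \<Rightarrow> nat \<Rightarrow> (nat \<Rightarrow> complex) \<Rightarrow> (nat \<Rightarrow> complex^'n)
    \<Rightarrow> (nat \<Rightarrow> complex) \<Rightarrow> complex" where
  "kform V m zs hs \<xi> = (\<Sum>j<m. \<Sum>k<m. ninner (NV V (zs j) (zs k) *v hs j) (hs k) * \<xi> j * cnj (\<xi> k))"

text \<open>A form Q has at least r negative squares: there is an r-dimensional subspace
  (spanned by u_0..u_{r-1}) on which Q is negative definite.\<close>
definition neg_squares_ge :: "((nat \<Rightarrow> complex) \<Rightarrow> complex) \<Rightarrow> nat \<Rightarrow> bool" where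
  "neg_squares_ge Q r \<longleftrightarrow> (\<exists>u :: nat \<Rightarrow> nat \<Rightarrow> complex. \<forall>c :: nat \<Rightarrow> complex.
      (\<exists>l<r. c l \<noteq> 0) \<longrightarrow> Re (Q (\<lambda>j. \<Sum>l<r. c l * u l j)) < 0)"

definition class_N :: "nat \<Rightarrow> (complex \<Rightarrow> complex^'n^'n) \<Rightarrow> bool" where
  "class_N \<kappa> V \<longleftrightarrow>
     (\<forall>i j. entry V i j meromorphic_on (- \<real>))
   \<and> (\<forall>z\<in>holdom V. cnj z \<in> holdom V \<and> V (cnj z) = cadj (V z))
   \<and> (\<forall>m zs hs. (\<forall>k<m. zs k \<in> holdom V) \<longrightarrow> \<not> neg_squares_ge (kform V m zs hs) (Suc \<kappa>))
   \<and> (\<exists>m zs hs. (\<forall>k<m. zs k \<in> holdom V) \<and> neg_squares_ge (kform V m zs hs) \<kappa>)"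

definition at_iinf :: "(complex \<Rightarrow> complex^'n^'n) \<Rightarrow> real filter" where
  "at_iinf V = inf at_top (principal {y. \<i> * complex_of_real y \<in> holdom V})"

definition Bset :: "(complex \<Rightarrow> complex^'n^'n) \<Rightarrow> (complex^'n) set" where
  "Bset V = {f. \<exists>L::real.
     ((\<lambda>y. y * Im (ninner (V (\<i> * complex_of_real y) *v f) f)) \<longlongrightarrow> L) (at_iinf V)}"

definition class_NR :: "nat \<Rightarrow> (complex \<Rightarrow> complex^'n^'n) \<Rightarrow> bool" where
  "class_NR \<kappa> V \<longleftrightarrow> class_N \<kappa> V
   \<and> (\<forall>f. ((\<lambda>y. ninner (V (\<i> * complex_of_real y) *v f) f / complex_of_real y) \<longlongrightarrow> 0) (at_iinf V))
   \<and> (\<forall>z\<in>holdom V. {h. \<forall>\<zeta>\<in>holdom V. NV V \<zeta> z *v h = 0} = {0})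
   \<and> (\<forall>f\<in>Bset V. ((\<lambda>y. V (\<i> * complex_of_real y) *v f) \<longlongrightarrow> 0) (at_iinf V))"

definition class_N1R :: "nat \<Rightarrow> (complex \<Rightarrow> complex^'n^'n) \<Rightarrow> bool" where
  "class_N1R \<kappa> V \<longleftrightarrow> class_NR \<kappa> V \<and> Bset V = UNIV"

definition transfer_fun :: "'a::chilbert set \<Rightarrow> ('a \<Rightarrow> 'a) \<Rightarrow> ('a \<Rightarrow> complex^'n) \<Rightarrow> (complex^'n \<Rightarrow> 'a)
    \<Rightarrow> complex^'n^'n \<Rightarrow> complex \<Rightarrow> complex^'n^'n" where
  "transfer_fun DA A0 B Bs D z =
     - matrix_inv (D + (\<chi> i j. B (resolvent DA A0 z (Bs (axis j 1))) $ i) - mat z)"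

end

theory Submission
  imports Defs
begin

(* Write M(z) = D + B (A0 - z)^(-1) B* - z and W = M^(-1), so that V = -W.
   Since Im (M(z) x, x) = Im z (|R(z) B* x|^2 - |x|^2) and |R(z) B*| <= |B| / |Im z|, M(z) is
   invertible for |Im z| > |B|; hence det M is a holomorphic function that does not vanish
   identically on either half-plane, V is meromorphic, and V is holomorphic exactly where
   det M(z) /= 0.
   The resolvent identity gives N_V(z, zeta) = W(zeta) E(z, zeta) W(z)* with
   E(z, zeta) = B R(conj z) R(zeta) B* - I, so for g_j = W(z_j)* h_j the kernel form is
   |sum xi_j R(conj z_j) B* g_j|^2 - |sum xi_j g_j|^2. Its negative part factors through C^n,
   so there are at most n = dim C^n negative squares, and n of them are attained at a single
   point far from the real axis, where R B* is a strict contraction.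
   Finally V(iy) = -(iy)^(-1) (1 + O(1/y)) as y grows, which yields the limits required
   for N^1(R), and the kernel condition holds because E(zeta, z) is injective once
   |Im zeta| |Im z| > |B|^2. *)

no_notation fps_nth (infixl \<open>$\<close> 75)

section \<open>Complex Hilbert spaces\<close>

lemma cscale_zero_left [simp]: "(0::complex) *\<^sub>C (x::'a::chilbert) = 0"
  using cscale_of_real[of 0 x] by simp

lemma cscale_one [simp]: "(1::complex) *\<^sub>C (x::'a::chilbert) = x"
  using cscale_of_real[of 1 x] by simp

lemma cscale_zero_right [simp]: "a *\<^sub>C (0::'a::chilbert) = 0"
  using cscale_add_right[of a "0::'a" 0] by simp

lemma cscale_minus_left: "(- a) *\<^sub>C (x::'a::chilbert) = - (a *\<^sub>C x)"
  by (metis add_eq_0_iff cscale_add_left cscale_zero_left neg_eq_iff_add_eq_0)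

lemma cscale_minus_right: "a *\<^sub>C (- x::'a::chilbert) = - (a *\<^sub>C x)"
  by (metis add_eq_0_iff cscale_add_right cscale_zero_right neg_eq_iff_add_eq_0)

lemma cscale_diff_right: "a *\<^sub>C (x - y::'a::chilbert) = a *\<^sub>C x - a *\<^sub>C y"
  using cscale_add_right[of a x "-y"] by (simp add: cscale_minus_right)

lemma cscale_diff_left: "(a - b) *\<^sub>C (x::'a::chilbert) = a *\<^sub>C x - b *\<^sub>C x"
  using cscale_add_left[of a "-b" x] by (simp add: cscale_minus_left)

lemma cinner_zero_left [simp]: "cinner (0::'a::chilbert) y = 0"
  using cinner_add_left[of "0::'a" 0 y] by simp

lemma cinner_zero_right [simp]: "cinner (x::'a::chilbert) 0 = 0"
  using cinner_commute[of x 0] by simp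

lemma cinner_add_right: "cinner (x::'a::chilbert) (y + z) = cinner x y + cinner x z"
  by (metis cinner_add_left cinner_commute complex_cnj_add)

lemma cinner_cscale_right: "cinner (x::'a::chilbert) (a *\<^sub>C y) = cnj a * cinner x y"
  by (metis cinner_cscale_left cinner_commute complex_cnj_mult)

lemma cinner_minus_left: "cinner (- x::'a::chilbert) y = - cinner x y"
  by (metis add_eq_0_iff cinner_add_left cinner_zero_left neg_eq_iff_add_eq_0)

lemma cinner_minus_right: "cinner (x::'a::chilbert) (- y) = - cinner x y"
  by (metis add_eq_0_iff cinner_add_right cinner_zero_right neg_eq_iff_add_eq_0)

lemma cinner_diff_left: "cinner (x - y::'a::chilbert) z = cinner x z - cinner y z"
  using cinner_add_left[of x "-y" z] by (simp add: cinner_minus_left)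

lemma cinner_diff_right: "cinner (x::'a::chilbert) (y - z) = cinner x y - cinner x z"
  using cinner_add_right[of x y "-z"] by (simp add: cinner_minus_right)

lemma cinner_sum_left: "cinner (\<Sum>i\<in>S. f i::'a::chilbert) y = (\<Sum>i\<in>S. cinner (f i) y)"
  by (induction S rule: infinite_finite_induct) (auto simp: cinner_add_left)

lemma cinner_sum_right: "cinner (y::'a::chilbert) (\<Sum>i\<in>S. f i) = (\<Sum>i\<in>S. cinner y (f i))"
  by (induction S rule: infinite_finite_induct) (auto simp: cinner_add_right)

lemma cinner_sum_cscale:
  "cinner (\<Sum>j\<in>S. a j *\<^sub>C Y j) (\<Sum>k\<in>T. b k *\<^sub>C Z k) =
      (\<Sum>j\<in>S. \<Sum>k\<in>T. a j * cnj (b k) * cinner (Y j) (Z k))"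
  for Y Z :: "'i \<Rightarrow> 'a::chilbert"
  by (simp add: cinner_sum_left cinner_sum_right cinner_cscale_left cinner_cscale_right
      sum_distrib_left mult.assoc) (subst sum.swap, simp add: mult.left_commute)

lemma cinner_self_Im [simp]: "Im (cinner (x::'a::chilbert) x) = 0"
  by (simp add: cinner_self_norm)

lemma cinner_self_Re [simp]: "Re (cinner (x::'a::chilbert) x) = (norm x)\<^sup>2"
  by (simp add: cinner_self_norm)

lemma cinner_self_eq_zero [simp]: "cinner (x::'a::chilbert) x = 0 \<longleftrightarrow> x = 0"
  by (simp add: cinner_self_norm)

lemma norm_cscale: "norm (a *\<^sub>C (x::'a::chilbert)) = cmod a * norm x"
proof -
  have "(norm (a *\<^sub>C x))\<^sup>2 = Re (cinner (a *\<^sub>C x) (a *\<^sub>C x))" by simp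
  also have "\<dots> = Re ((a * cnj a) * cinner x x)"
    by (simp add: cinner_cscale_left cinner_cscale_right mult.assoc)
  also have "a * cnj a = complex_of_real ((cmod a)\<^sup>2)"
    by (simp add: complex_mult_cnj cmod_power2)
  also have "Re (complex_of_real ((cmod a)\<^sup>2) * cinner x x) = (cmod a * norm x)\<^sup>2"
    by (simp add: cinner_self_norm power_mult_distrib del: of_real_power)
  finally show ?thesis by (simp add: power2_eq_iff_nonneg)
qed

lemma norm_diff_projection_sq:
  fixes v t :: "'a::chilbert"
  assumes "t \<noteq> 0"
  shows "(norm (v - (cinner v t / complex_of_real ((norm t)\<^sup>2)) *\<^sub>C t))\<^sup>2
         = (norm v)\<^sup>2 - (cmod (cinner v t))\<^sup>2 / (norm t)\<^sup>2"
proof -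
  define c where "c = cinner v t"
  define n where "n = complex_of_real ((norm t)\<^sup>2)"
  have n: "n \<noteq> 0" "cnj n = n" "cinner t t = n" using assms by (simp_all add: n_def cinner_self_norm)
  have "complex_of_real ((norm (v - (c / n) *\<^sub>C t))\<^sup>2)
      = cinner v v - cnj (c/n) * c - (c/n) * cnj c + (c/n) * cnj (c/n) * n"
    by (simp add: cinner_self_norm[symmetric] cinner_diff_left cinner_diff_right
        cinner_cscale_left cinner_cscale_right cinner_commute[of t v] c_def[symmetric] n
        algebra_simps del: of_real_power)
  also have "\<dots> = cinner v v - c * cnj c / n"
    using n by (simp add: field_simps)
  also have "\<dots> = complex_of_real ((norm v)\<^sup>2 - (cmod c)\<^sup>2 / (norm t)\<^sup>2)"
    by (simp add: complex_mult_cnj cmod_power2 cinner_self_norm n_def)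
  finally show ?thesis unfolding c_def n_def of_real_eq_iff .
qed

lemma cinner_cauchy_schwarz: "cmod (cinner (x::'a::chilbert) y) \<le> norm x * norm y"
proof (cases "y = 0")
  case False
  have "0 \<le> (norm x)\<^sup>2 - (cmod (cinner x y))\<^sup>2 / (norm y)\<^sup>2"
    using norm_diff_projection_sq[OF False, of x] by (metis zero_le_power2)
  then have "(cmod (cinner x y))\<^sup>2 \<le> (norm x * norm y)\<^sup>2"
    using False by (simp add: field_simps power_mult_distrib)
  then show ?thesis using power2_le_imp_le by fastforce
qed simp

lemma parallelogram_law:
  "(norm (x + y::'a::chilbert))\<^sup>2 + (norm (x - y))\<^sup>2 = 2 * (norm x)\<^sup>2 + 2 * (norm y)\<^sup>2"
proof -
  have "complex_of_real ((norm (x + y))\<^sup>2 + (norm (x - y))\<^sup>2)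
      = complex_of_real (2 * (norm x)\<^sup>2 + 2 * (norm y)\<^sup>2)"
    by (simp add: cinner_self_norm[symmetric] cinner_add_left cinner_add_right
        cinner_diff_left cinner_diff_right del: of_real_power)
  then show ?thesis by (simp only: of_real_eq_iff)
qed

lemma cinner_dense_eq_zero:
  fixes p :: "'a::chilbert"
  assumes "closure S = UNIV" and "\<And>u. u \<in> S \<Longrightarrow> cinner u p = 0"
  shows "p = 0"
proof (rule ccontr)
  assume "p \<noteq> 0"
  then have np: "norm p > 0" by simp
  obtain u where u: "u \<in> S" "dist u p < norm p / 2"
    using assms(1) np by (metis UNIV_I closure_approachable half_gt_zero)
  have "(norm p)\<^sup>2 = cmod (cinner (p - u) p)"
    using assms(2)[OF u(1)] by (simp add: cinner_diff_left cinner_self_norm norm_power)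
  also have "\<dots> \<le> norm (p - u) * norm p" by (rule cinner_cauchy_schwarz)
  also have "\<dots> < norm p / 2 * norm p"
    using u(2) np by (simp add: dist_norm norm_minus_commute)
  finally show False using np by (simp add: power2_eq_square)
qed

lemma bounded_bilinear_cinner: "bounded_bilinear (cinner :: 'a::chilbert \<Rightarrow> 'a \<Rightarrow> complex)"
proof
  fix a a' b b' :: 'a and r :: real
  show "cinner (a + a') b = cinner a b + cinner a' b" by (rule cinner_add_left)
  show "cinner a (b + b') = cinner a b + cinner a b'" by (rule cinner_add_right)
  show "cinner (r *\<^sub>R a) b = r *\<^sub>R cinner a b"
    using cinner_cscale_left[of "complex_of_real r" a b]
      by (simp add: cscale_of_real scaleR_conv_of_real)
  show "cinner a (r *\<^sub>R b) = r *\<^sub>R cinner a b"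
    using cinner_cscale_right[of a "complex_of_real r" b]
      by (simp add: cscale_of_real scaleR_conv_of_real)
next
  show "\<exists>K. \<forall>a b::'a. norm (cinner a b) \<le> norm a * norm b * K"
    by (rule exI[of _ 1]) (simp add: cinner_cauchy_schwarz)
qed

lemmas tendsto_cinner [tendsto_intros] = bounded_bilinear.tendsto[OF bounded_bilinear_cinner]

lemma bounded_linear_cscale: "bounded_linear (\<lambda>x::'a::chilbert. z *\<^sub>C x)"
proof
  fix x y :: 'a and r :: real
  show "z *\<^sub>C (x + y) = z *\<^sub>C x + z *\<^sub>C y" by (rule cscale_add_right)
  show "z *\<^sub>C (r *\<^sub>R x) = r *\<^sub>R (z *\<^sub>C x)"
    by (simp add: cscale_of_real[symmetric] cscale_cscale mult.commute)
next
  show "\<exists>K. \<forall>x::'a. norm (z *\<^sub>C x) \<le> norm x * K"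
    by (rule exI[of _ "cmod z"]) (simp add: norm_cscale mult.commute)
qed

lemmas tendsto_cscale [tendsto_intros] = bounded_linear.tendsto[OF bounded_linear_cscale]

lemma csubspace_midpoint:
  assumes "csubspace S" "a \<in> S" "b \<in> S"
  shows "(1/2::complex) *\<^sub>C (a + b) \<in> S"
  using assms unfolding csubspace_def by blast

lemma scaleR_2_cscale_half [simp]: "2 *\<^sub>R ((1/2::complex) *\<^sub>C x) = (x::'a::chilbert)"
  using cscale_of_real[of 2 "(1/2::complex) *\<^sub>C x"] by (simp add: cscale_cscale)

lemma minimizing_sequence_Cauchy:
  fixes y :: "'a::chilbert"
  assumes S: "csubspace S" and X: "\<And>n. X n \<in> S"
    and \<delta>: "\<And>u. u \<in> S \<Longrightarrow> \<delta> \<le> (norm (y - u))\<^sup>2"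
    and close: "\<And>n. (norm (y - X n))\<^sup>2 \<le> \<delta> + e n" and e: "e \<longlonglongrightarrow> 0"
  shows "Cauchy X"
proof (rule metric_CauchyI)
  have dist_sq: "(norm (X n - X m))\<^sup>2 \<le> 2 * e n + 2 * e m" for n m
  proof -
    \<comment> \<open>parallelogram law around the midpoint of X n and X m, which lies in S\<close>
    define mid where "mid = (1/2::complex) *\<^sub>C (X n + X m)"
    have "2 *\<^sub>R mid = X n + X m" by (simp add: mid_def)
    then have "(y - X n) + (y - X m) = 2 *\<^sub>R (y - mid)"
      by (simp only: scaleR_right_diff_distrib) (simp add: scaleR_2)
    then have "4 * \<delta> \<le> (norm ((y - X n) + (y - X m)))\<^sup>2"
      using \<delta>[OF csubspace_midpoint[OF S X X]] by (simp add: mid_def power_mult_distrib)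
    then show ?thesis
      using parallelogram_law[of "y - X n" "y - X m"] close[of n] close[of m]
      by (simp add: norm_minus_commute)
  qed
  fix \<epsilon> :: real assume "\<epsilon> > 0"
  then have "eventually (\<lambda>n. e n < \<epsilon>\<^sup>2 / 4) sequentially"
    by (intro order_tendstoD(2)[OF e]) simp
  then obtain N where N: "\<And>n. n \<ge> N \<Longrightarrow> e n < \<epsilon>\<^sup>2 / 4"
    unfolding eventually_sequentially by blast
  have "dist (X m) (X n) < \<epsilon>" if "m \<ge> N" "n \<ge> N" for m n
  proof -
    have "(norm (X m - X n))\<^sup>2 < \<epsilon>\<^sup>2" using dist_sq[of m n] N[OF that(1)] N[OF that(2)] by linarith
    then show ?thesis using \<open>\<epsilon> > 0\<close> by (simp add: dist_norm power_less_imp_less_base)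
  qed
  then show "\<exists>N. \<forall>m\<ge>N. \<forall>n\<ge>N. dist (X m) (X n) < \<epsilon>" by blast
qed

lemma nearest_point_closed_csubspace:
  fixes y :: "'a::chilbert"
  assumes S: "csubspace S" "closed S"
  obtains s where "s \<in> S" "\<And>u. u \<in> S \<Longrightarrow> norm (y - s) \<le> norm (y - u)"
proof -
  define \<delta> where "\<delta> = (INF u\<in>S. (norm (y - u))\<^sup>2)"
  define e :: "nat \<Rightarrow> real" where "e n = 1 / real (Suc n)" for n
  have S_ne: "S \<noteq> {}" using S(1) by (auto simp: csubspace_def)
  have bdd: "bdd_below ((\<lambda>u. (norm (y - u))\<^sup>2) ` S)" by (rule bdd_belowI2[of _ 0]) simp
  have \<delta>_le: "\<delta> \<le> (norm (y - u))\<^sup>2" if "u \<in> S" for u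
    unfolding \<delta>_def by (rule cINF_lower[OF bdd that])
  have "\<exists>x\<in>S. (norm (y - x))\<^sup>2 < \<delta> + e n" for n
    using cINF_less_iff[OF S_ne bdd, of "\<delta> + e n"] by (simp add: \<delta>_def[symmetric] e_def)
  then obtain X where X: "\<And>n. X n \<in> S" "\<And>n. (norm (y - X n))\<^sup>2 < \<delta> + e n" by metis
  have e_lim: "e \<longlonglongrightarrow> 0"
    unfolding e_def using LIMSEQ_Suc[OF lim_inverse_n'] by simp
  have "Cauchy X"
    by (rule minimizing_sequence_Cauchy[OF S(1) X(1) \<delta>_le less_imp_le[OF X(2)] e_lim])
  then obtain s where s: "X \<longlonglongrightarrow> s" using Cauchy_convergent_iff convergent_def by blast
  have "s \<in> S" using S(2) X(1) s by (metis closed_sequentially)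
  moreover have "norm (y - s) \<le> norm (y - u)" if "u \<in> S" for u
  proof -
    have "(norm (y - s))\<^sup>2 \<le> \<delta>"
    proof (rule LIMSEQ_le)
      show "(\<lambda>n. (norm (y - X n))\<^sup>2) \<longlonglongrightarrow> (norm (y - s))\<^sup>2" by (intro tendsto_intros s)
      show "(\<lambda>n. \<delta> + e n) \<longlonglongrightarrow> \<delta>" using tendsto_add[OF tendsto_const e_lim] by simp
      show "\<exists>N. \<forall>n\<ge>N. (norm (y - X n))\<^sup>2 \<le> \<delta> + e n" using X(2) less_imp_le by blast
    qed
    then show ?thesis using \<delta>_le[OF that] by (meson order_trans norm_ge_zero power2_le_imp_le)
  qed
  ultimately show thesis using that by blast
qed

lemma nearest_point_orthogonal:
  fixes y :: "'a::chilbert"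
  assumes S: "csubspace S" and s: "s \<in> S" "\<And>u. u \<in> S \<Longrightarrow> norm (y - s) \<le> norm (y - u)"
    and t: "t \<in> S"
  shows "cinner (y - s) t = 0"
proof (cases "t = 0")
  case False
  define c where "c = cinner (y - s) t / complex_of_real ((norm t)\<^sup>2)"
  have "s + c *\<^sub>C t \<in> S" using S s(1) t unfolding csubspace_def by blast
  then have "norm (y - s) \<le> norm ((y - s) - c *\<^sub>C t)"
    using s(2) by (simp add: algebra_simps)
  then have "(norm (y - s))\<^sup>2 \<le> (norm ((y - s) - c *\<^sub>C t))\<^sup>2" by simp
  also have "\<dots> = (norm (y - s))\<^sup>2 - (cmod (cinner (y - s) t))\<^sup>2 / (norm t)\<^sup>2"
    unfolding c_def by (rule norm_diff_projection_sq[OF False])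
  finally show ?thesis using False by (simp add: divide_le_0_iff)
qed simp

lemma closed_csubspace_eq_UNIV:
  fixes S :: "'a::chilbert set"
  assumes "csubspace S" "closed S" and "\<And>v. (\<And>u. u \<in> S \<Longrightarrow> cinner v u = 0) \<Longrightarrow> v = 0"
  shows "S = UNIV"
proof -
  have "y \<in> S" for y
  proof -
    obtain s where "s \<in> S" "\<And>u. u \<in> S \<Longrightarrow> norm (y - s) \<le> norm (y - u)"
      using nearest_point_closed_csubspace[OF assms(1,2)] by blast
    then have "y - s = 0" using assms(3) nearest_point_orthogonal[OF assms(1)] by blast
    then show ?thesis using \<open>s \<in> S\<close> by simp
  qed
  then show ?thesis by blast
qed

section \<open>Self-adjoint operators and their resolvents\<close>

lemma eventually_at_abs_Im_ge_half:
  assumes "Im w0 \<noteq> 0"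
  shows "eventually (\<lambda>w. \<bar>Im w0\<bar> / 2 \<le> \<bar>Im w\<bar>) (at w0)"
  unfolding eventually_at
proof (intro exI conjI ballI impI)
  show "\<bar>Im w0\<bar> / 2 > 0" using assms by simp
  fix w assume "w \<noteq> w0 \<and> dist w w0 < \<bar>Im w0\<bar> / 2"
  then have "\<bar>Im w - Im w0\<bar> < \<bar>Im w0\<bar> / 2"
    using abs_Im_le_cmod[of "w - w0"] by (simp add: dist_norm)
  then show "\<bar>Im w0\<bar> / 2 \<le> \<bar>Im w\<bar>" by linarith
qed

locale selfadjoint_operator =
  fixes DA :: "'a::chilbert set" and A :: "'a \<Rightarrow> 'a"
  assumes selfadjoint: "selfadjoint DA A"
begin

lemma domain_csubspace: "csubspace DA"
  and domain_dense: "closure DA = UNIV"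
  and in_domain_iff: "y \<in> DA \<longleftrightarrow> (\<exists>w. \<forall>x\<in>DA. cinner (A x) y = cinner x w)"
  and symmetric: "x \<in> DA \<Longrightarrow> y \<in> DA \<Longrightarrow> cinner (A x) y = cinner x (A y)"
  using selfadjoint unfolding selfadjoint_def by blast+

lemma domain_add: "x \<in> DA \<Longrightarrow> y \<in> DA \<Longrightarrow> x + y \<in> DA"
  and domain_cscale: "x \<in> DA \<Longrightarrow> a *\<^sub>C x \<in> DA"
  using domain_csubspace unfolding csubspace_def by blast+

lemma domain_diff: "x \<in> DA \<Longrightarrow> y \<in> DA \<Longrightarrow> x - y \<in> DA"
  using domain_add domain_cscale[of y "-1"]
    by (metis cscale_minus_left cscale_one diff_conv_add_uminus)

lemma op_add: "x \<in> DA \<Longrightarrow> y \<in> DA \<Longrightarrow> A (x + y) = A x + A y"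
  and op_cscale: "x \<in> DA \<Longrightarrow> A (a *\<^sub>C x) = a *\<^sub>C A x"
  using selfadjoint unfolding selfadjoint_def clinear_on_def by blast+

lemma op_diff: "x \<in> DA \<Longrightarrow> y \<in> DA \<Longrightarrow> A (x - y) = A x - A y"
  using op_add[of x "- y"] op_cscale[of y "-1"] domain_cscale[of y "-1"]
  by (simp add: cscale_minus_left)

lemma Im_cinner_op_self: "x \<in> DA \<Longrightarrow> Im (cinner (A x) x) = 0"
proof -
  assume "x \<in> DA"
  then have "cinner (A x) x = cnj (cinner (A x) x)"
    using symmetric[of x x] cinner_commute[of x "A x"] by simp
  then have "Im (cinner (A x) x) = - Im (cinner (A x) x)"
    by (metis cnj.sel(2))
  then show ?thesis by simp
qed

lemma Im_cinner_shift_self: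
  "x \<in> DA \<Longrightarrow> Im (cinner (A x - z *\<^sub>C x) x) = - Im z * (norm x)\<^sup>2"
  by (simp add: cinner_diff_left cinner_cscale_left cinner_self_norm Im_cinner_op_self)

lemma norm_shift_lower_bound:
  assumes x: "x \<in> DA"
  shows "\<bar>Im z\<bar> * norm x \<le> norm (A x - z *\<^sub>C x)"
proof -
  have "\<bar>Im z\<bar> * (norm x)\<^sup>2 = \<bar>Im (cinner (A x - z *\<^sub>C x) x)\<bar>"
    by (simp add: Im_cinner_shift_self[OF x] abs_mult)
  also have "\<dots> \<le> norm (A x - z *\<^sub>C x) * norm x"
    using abs_Im_le_cmod[of "cinner (A x - z *\<^sub>C x) x"] cinner_cauchy_schwarz[of "A x - z *\<^sub>C x" x]
    by linarith
  finally show ?thesis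
    by (cases "x = 0") (auto simp: power2_eq_square mult.assoc[symmetric])
qed

lemma shift_inj:
  assumes "Im z \<noteq> 0" "x1 \<in> DA" "x2 \<in> DA" "A x1 - z *\<^sub>C x1 = A x2 - z *\<^sub>C x2"
  shows "x1 = x2"
proof -
  have "A (x1 - x2) - z *\<^sub>C (x1 - x2) = 0"
    using assms(2-4) by (simp add: op_diff cscale_diff_right algebra_simps)
  then have "\<bar>Im z\<bar> * norm (x1 - x2) \<le> 0"
    using norm_shift_lower_bound[OF domain_diff[OF assms(2,3)], of z] by simp
  then show ?thesis using assms(1) by (simp add: mult_le_0_iff)
qed

lemma graph_closed:
  assumes X: "\<And>n. X n \<in> DA" "X \<longlonglongrightarrow> x" and AX: "(\<lambda>n. A (X n)) \<longlonglongrightarrow> w"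
  shows "x \<in> DA" "A x = w"
proof -
  have adj: "cinner (A u) x = cinner u w" if u: "u \<in> DA" for u
  proof (rule LIMSEQ_unique)
    show "(\<lambda>n. cinner (A u) (X n)) \<longlonglongrightarrow> cinner (A u) x" by (intro tendsto_intros X(2))
    have "(\<lambda>n. cinner u (A (X n))) \<longlonglongrightarrow> cinner u w" by (intro tendsto_intros AX)
    then show "(\<lambda>n. cinner (A u) (X n)) \<longlonglongrightarrow> cinner u w"
      by (simp only: symmetric[OF u X(1)])
  qed
  then show x: "x \<in> DA" unfolding in_domain_iff[of x] by blast
  have "A x - w = 0"
  proof (rule cinner_dense_eq_zero[OF domain_dense])
    show "cinner u (A x - w) = 0" if "u \<in> DA" for u
      using adj[OF that] symmetric[OF that x] by (simp add: cinner_diff_right)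
  qed
  then show "A x = w" by simp
qed

lemma shift_range_closed:
  assumes z: "Im z \<noteq> 0"
  shows "closed ((\<lambda>x. A x - z *\<^sub>C x) ` DA)"
  unfolding closed_sequential_limits
proof (intro allI impI, elim conjE)
  fix Y y assume "\<forall>n. Y n \<in> (\<lambda>x. A x - z *\<^sub>C x) ` DA" and Y: "Y \<longlonglongrightarrow> y"
  then have "\<forall>n. \<exists>x. x \<in> DA \<and> Y n = A x - z *\<^sub>C x" by (auto simp: image_iff)
  then obtain X where X: "\<And>n. X n \<in> DA" "\<And>n. Y n = A (X n) - z *\<^sub>C X n"
    by (metis (mono_tags))
  have "Cauchy X"
  proof (rule metric_CauchyI)
    fix \<epsilon> :: real assume "\<epsilon> > 0"
    then have "\<bar>Im z\<bar> * \<epsilon> > 0" using z by simp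
    then obtain N where N: "\<And>m n. m \<ge> N \<Longrightarrow> n \<ge> N \<Longrightarrow> dist (Y m) (Y n) < \<bar>Im z\<bar> * \<epsilon>"
      using metric_CauchyD[OF LIMSEQ_imp_Cauchy[OF Y]] by blast
    have "dist (X m) (X n) < \<epsilon>" if "m \<ge> N" "n \<ge> N" for m n
    proof -
      have "Y m - Y n = A (X m - X n) - z *\<^sub>C (X m - X n)"
        by (simp add: X(2) op_diff[OF X(1) X(1)] cscale_diff_right)
      then have "\<bar>Im z\<bar> * norm (X m - X n) \<le> norm (Y m - Y n)"
        using norm_shift_lower_bound[OF domain_diff[OF X(1) X(1)], of z] by simp
      then have "\<bar>Im z\<bar> * norm (X m - X n) < \<bar>Im z\<bar> * \<epsilon>"
        using N[OF that] by (simp add: dist_norm)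
      then show ?thesis using z by (simp add: dist_norm)
    qed
    then show "\<exists>N. \<forall>m\<ge>N. \<forall>n\<ge>N. dist (X m) (X n) < \<epsilon>" by blast
  qed
  then obtain x where x: "X \<longlonglongrightarrow> x" using Cauchy_convergent_iff convergent_def by blast
  have "(\<lambda>n. Y n + z *\<^sub>C X n) \<longlonglongrightarrow> y + z *\<^sub>C x" by (intro tendsto_intros Y x)
  then have "(\<lambda>n. A (X n)) \<longlonglongrightarrow> y + z *\<^sub>C x" by (simp add: X(2))
  then have "x \<in> DA" "A x = y + z *\<^sub>C x" using graph_closed[OF X(1) x] by blast+
  then show "y \<in> (\<lambda>x. A x - z *\<^sub>C x) ` DA" by (intro image_eqI[of _ _ x]) auto
qed

lemma shift_range_csubspace: "csubspace ((\<lambda>x. A x - z *\<^sub>C x) ` DA)"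
  unfolding csubspace_def
proof (intro conjI ballI allI)
  have "0 \<in> DA" using domain_csubspace by (simp add: csubspace_def)
  moreover have "A 0 = 0" using op_cscale[OF \<open>0 \<in> DA\<close>, of 0] by simp
  ultimately show "0 \<in> (\<lambda>x. A x - z *\<^sub>C x) ` DA" by (intro image_eqI[of _ _ 0]) auto
next
  fix u v assume "u \<in> (\<lambda>x. A x - z *\<^sub>C x) ` DA" "v \<in> (\<lambda>x. A x - z *\<^sub>C x) ` DA"
  then obtain x y where "x \<in> DA" "y \<in> DA" "u = A x - z *\<^sub>C x" "v = A y - z *\<^sub>C y" by blast
  then show "u + v \<in> (\<lambda>x. A x - z *\<^sub>C x) ` DA"
    by (intro image_eqI[of _ _ "x + y"]) (simp_all add: op_add domain_add cscale_add_right)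
next
  fix a u assume "u \<in> (\<lambda>x. A x - z *\<^sub>C x) ` DA"
  then obtain x where "x \<in> DA" "u = A x - z *\<^sub>C x" by blast
  then show "a *\<^sub>C u \<in> (\<lambda>x. A x - z *\<^sub>C x) ` DA"
    by (intro image_eqI[of _ _ "a *\<^sub>C x"])
       (simp_all add: op_cscale domain_cscale cscale_diff_right cscale_cscale mult.commute)
qed

lemma shift_range_orthogonal:
  assumes z: "Im z \<noteq> 0" and v: "\<And>u. u \<in> DA \<Longrightarrow> cinner v (A u - z *\<^sub>C u) = 0"
  shows "v = 0"
proof -
  have "cinner (A u - z *\<^sub>C u) v = 0" if "u \<in> DA" for u
    using v[OF that] cinner_commute[of v "A u - z *\<^sub>C u"] by simp
  then have v': "cinner (A u) v - z * cinner u v = 0" if "u \<in> DA" for u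
    using that by (simp add: cinner_diff_left cinner_cscale_left)
  then have "\<forall>u\<in>DA. cinner (A u) v = cinner u (cnj z *\<^sub>C v)"
    by (simp add: cinner_cscale_right)
  then have "v \<in> DA" unfolding in_domain_iff[of v] by blast
  then have "Im z * (norm v)\<^sup>2 = 0"
    using v'[OF \<open>v \<in> DA\<close>] Im_cinner_op_self[OF \<open>v \<in> DA\<close>] by (simp add: cinner_self_norm)
  then show ?thesis using z by simp
qed

lemma shift_surj:
  assumes z: "Im z \<noteq> 0"
  shows "\<exists>x\<in>DA. A x - z *\<^sub>C x = y"
proof -
  have "(\<lambda>x. A x - z *\<^sub>C x) ` DA = UNIV"
  proof (rule closed_csubspace_eq_UNIV[OF shift_range_csubspace shift_range_closed[OF z]])
    fix v assume v: "\<And>u. u \<in> (\<lambda>x. A x - z *\<^sub>C x) ` DA \<Longrightarrow> cinner v u = 0"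
    show "v = 0"
    proof (rule shift_range_orthogonal[OF z])
      show "cinner v (A u - z *\<^sub>C u) = 0" if "u \<in> DA" for u
        using v[OF imageI[OF that]] .
    qed
  qed
  then have "y \<in> (\<lambda>x. A x - z *\<^sub>C x) ` DA" by simp
  then show ?thesis by blast
qed

abbreviation R where "R z \<equiv> resolvent DA A z"

lemma resolvent_in_domain: "Im z \<noteq> 0 \<Longrightarrow> R z y \<in> DA"
  and resolvent_eq: "Im z \<noteq> 0 \<Longrightarrow> A (R z y) - z *\<^sub>C R z y = y"
proof -
  assume "Im z \<noteq> 0"
  then have "\<exists>!x. x \<in> DA \<and> A x - z *\<^sub>C x = y" using shift_surj shift_inj by blast
  then have "R z y \<in> DA \<and> A (R z y) - z *\<^sub>C R z y = y"
    unfolding resolvent_def by (rule theI')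
  then show "R z y \<in> DA" "A (R z y) - z *\<^sub>C R z y = y" by blast+
qed

lemma resolvent_unique: "Im z \<noteq> 0 \<Longrightarrow> x \<in> DA \<Longrightarrow> A x - z *\<^sub>C x = y \<Longrightarrow> R z y = x"
  using shift_inj resolvent_in_domain resolvent_eq by metis

lemma resolvent_add:
  assumes z: "Im z \<noteq> 0"
  shows "R z (y1 + y2) = R z y1 + R z y2"
proof (rule resolvent_unique[OF z])
  show "R z y1 + R z y2 \<in> DA" by (simp add: domain_add resolvent_in_domain z)
  have "A (R z y1 + R z y2) - z *\<^sub>C (R z y1 + R z y2)
      = (A (R z y1) - z *\<^sub>C R z y1) + (A (R z y2) - z *\<^sub>C R z y2)"
    by (simp add: op_add resolvent_in_domain z cscale_add_right)
  then show "A (R z y1 + R z y2) - z *\<^sub>C (R z y1 + R z y2) = y1 + y2"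
    by (simp add: resolvent_eq[OF z])
qed

lemma resolvent_cscale:
  assumes z: "Im z \<noteq> 0"
  shows "R z (a *\<^sub>C y) = a *\<^sub>C R z y"
proof (rule resolvent_unique[OF z])
  show "a *\<^sub>C R z y \<in> DA" by (simp add: domain_cscale resolvent_in_domain z)
  have "A (a *\<^sub>C R z y) - z *\<^sub>C (a *\<^sub>C R z y) = a *\<^sub>C (A (R z y) - z *\<^sub>C R z y)"
    by (simp add: op_cscale resolvent_in_domain z cscale_diff_right cscale_cscale mult.commute)
  then show "A (a *\<^sub>C R z y) - z *\<^sub>C (a *\<^sub>C R z y) = a *\<^sub>C y"
    by (simp add: resolvent_eq[OF z])
qed

lemma resolvent_sum: "Im z \<noteq> 0 \<Longrightarrow> R z (\<Sum>i\<in>S. f i) = (\<Sum>i\<in>S. R z (f i))"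
  by (induction S rule: infinite_finite_induct)
     (auto simp: resolvent_add resolvent_cscale[of z 0 0, simplified])

lemma norm_resolvent_le: "Im z \<noteq> 0 \<Longrightarrow> norm (R z y) \<le> norm y / \<bar>Im z\<bar>"
  using norm_shift_lower_bound[OF resolvent_in_domain[of z y], of z]
  by (simp add: resolvent_eq field_simps)

lemma resolvent_adjoint:
  assumes z: "Im z \<noteq> 0"
  shows "cinner (R z u) v = cinner u (R (cnj z) v)"
proof -
  have z': "Im (cnj z) \<noteq> 0" using z by simp
  define x w where "x = R z u" and "w = R (cnj z) v"
  have x: "x \<in> DA" "A x - z *\<^sub>C x = u" using z
    by (simp_all add: x_def resolvent_in_domain resolvent_eq)
  have w: "w \<in> DA" "A w - cnj z *\<^sub>C w = v"
    using z' by (simp_all add: w_def resolvent_in_domain resolvent_eq)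
  have "cinner x v = cinner x (A w) - z * cinner x w"
    by (simp add: w(2)[symmetric] cinner_diff_right cinner_cscale_right)
  also have "\<dots> = cinner u w"
    by (simp add: x(2)[symmetric] cinner_diff_left cinner_cscale_left symmetric[OF x(1) w(1)])
  finally show ?thesis by (simp add: x_def w_def)
qed

lemma resolvent_identity:
  assumes z: "Im z \<noteq> 0" and w: "Im w \<noteq> 0"
  shows "R z u - R w u = (z - w) *\<^sub>C R z (R w u)"
proof -
  define a where "a = R w u"
  have a: "a \<in> DA" "A a - w *\<^sub>C a = u" using w
    by (simp_all add: a_def resolvent_in_domain resolvent_eq)
  have "A a - z *\<^sub>C a = u + (w - z) *\<^sub>C a"
    using a(2) by (simp add: cscale_diff_left algebra_simps)
  then have "R z (u + (w - z) *\<^sub>C a) = a" using resolvent_unique[OF z a(1)] by simp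
  then have "R z u + (w - z) *\<^sub>C R z a = a" by (simp add: resolvent_add resolvent_cscale z)
  then have "R z u - a = (z - w) *\<^sub>C R z a"
    by (simp add: cscale_diff_left algebra_simps)
  then show ?thesis by (simp add: a_def)
qed

lemma resolvent_commute:
  assumes z: "Im z \<noteq> 0" and w: "Im w \<noteq> 0"
  shows "R z (R w u) = R w (R z u)"
proof (cases "z = w")
  case False
  have "(z - w) *\<^sub>C R z (R w u) = (z - w) *\<^sub>C R w (R z u)"
    using resolvent_identity[OF z w, of u] resolvent_identity[OF w z, of u]
    by (metis cscale_minus_left minus_diff_eq)
  then have "(1 / (z - w)) *\<^sub>C ((z - w) *\<^sub>C R z (R w u)) = (1 / (z - w)) *\<^sub>C ((z - w) *\<^sub>C R w (R z u))"
    by simp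
  then show ?thesis using False by (simp add: cscale_cscale)
qed simp

lemma Im_cinner_resolvent:
  assumes z: "Im z \<noteq> 0"
  shows "Im (cinner (R z u) u) = Im z * (norm (R z u))\<^sup>2"
proof -
  define x where "x = R z u"
  have x: "x \<in> DA" "A x - z *\<^sub>C x = u" using z
    by (simp_all add: x_def resolvent_in_domain resolvent_eq)
  have "cinner x u = cinner (A x) x - cnj z * cinner x x"
    by (simp add: x(2)[symmetric] cinner_diff_right cinner_cscale_right symmetric[OF x(1) x(1)])
  then show ?thesis using Im_cinner_op_self[OF x(1)] by (simp add: x_def cinner_self_norm)
qed

lemma resolvent_tendsto:
  assumes w0: "Im w0 \<noteq> 0"
  shows "((\<lambda>w. R w c) \<longlongrightarrow> R w0 c) (at w0)"
proof -
  define C where "C = 2 * norm (R w0 c) / \<bar>Im w0\<bar>"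
  have "eventually (\<lambda>w. norm (R w c - R w0 c) \<le> C * cmod (w - w0)) (at w0)"
    using eventually_at_abs_Im_ge_half[OF w0]
  proof (rule eventually_mono)
    fix w assume h: "\<bar>Im w0\<bar> / 2 \<le> \<bar>Im w\<bar>"
    then have w: "Im w \<noteq> 0" using w0 by auto
    have "norm (R w c - R w0 c) = cmod (w - w0) * norm (R w (R w0 c))"
      by (simp add: resolvent_identity[OF w w0] norm_cscale)
    also have "\<dots> \<le> cmod (w - w0) * (norm (R w0 c) / \<bar>Im w\<bar>)"
      by (intro mult_left_mono norm_resolvent_le[OF w]) auto
    also have "\<dots> \<le> cmod (w - w0) * (norm (R w0 c) / (\<bar>Im w0\<bar> / 2))"
      using h w0 by (intro mult_left_mono divide_left_mono) auto
    also have "\<dots> = C * cmod (w - w0)" by (simp add: C_def field_simps)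
    finally show "norm (R w c - R w0 c) \<le> C * cmod (w - w0)" .
  qed
  moreover have "((\<lambda>w. C * cmod (w - w0)) \<longlongrightarrow> C * cmod (w0 - w0)) (at w0)"
    by (intro tendsto_intros)
  ultimately have "((\<lambda>w. R w c - R w0 c) \<longlongrightarrow> 0) (at w0)"
    by (simp add: Lim_null_comparison)
  then show ?thesis by (simp add: LIM_zero_iff)
qed

lemma cinner_resolvent_has_field_derivative:
  assumes w0: "Im w0 \<noteq> 0"
  shows "((\<lambda>w. cinner (R w a) b) has_field_derivative cinner (R w0 (R w0 a)) b) (at w0)"
  unfolding has_field_derivative_iff
proof (rule Lim_transform_eventually)
  show "((\<lambda>w. cinner (R w (R w0 a)) b) \<longlongrightarrow> cinner (R w0 (R w0 a)) b) (at w0)"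
    by (intro tendsto_intros resolvent_tendsto w0)
  have "eventually (\<lambda>w. w \<noteq> w0) (at w0)" by (simp add: eventually_at_filter)
  with eventually_at_abs_Im_ge_half[OF w0]
  show "eventually (\<lambda>w. cinner (R w (R w0 a)) b
      = (cinner (R w a) b - cinner (R w0 a) b) / (w - w0)) (at w0)"
  proof (rule eventually_elim2)
    fix w assume "\<bar>Im w0\<bar> / 2 \<le> \<bar>Im w\<bar>" "w \<noteq> w0"
    moreover from this have "cinner (R w a) b - cinner (R w0 a) b =
        (w - w0) * cinner (R w (R w0 a)) b"
      using w0 by (simp add: cinner_diff_left[symmetric] resolvent_identity cinner_cscale_left)
    ultimately show "cinner (R w (R w0 a)) b = (cinner (R w a) b - cinner (R w0 a) b) / (w - w0)"
      by simp
  qed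
qed

lemma cinner_resolvent_holomorphic: "(\<lambda>w. cinner (R w a) b) holomorphic_on (- \<real>)"
  unfolding holomorphic_on_open[OF open_Compl[OF closed_complex_Reals]]
  using cinner_resolvent_has_field_derivative complex_is_Real_iff by blast

end

section \<open>The space C^n and complex matrices\<close>

lemma ninner_add_left: "ninner (x + y) z = ninner x z + ninner y z"
  by (simp add: ninner_def distrib_right sum.distrib)

lemma ninner_add_right: "ninner x (y + z) = ninner x y + ninner x z"
  by (simp add: ninner_def distrib_left sum.distrib)

lemma ninner_scale_left: "ninner (a *s x) y = a * ninner x y"
  by (simp add: ninner_def sum_distrib_left mult.assoc)

lemma ninner_scale_right: "ninner x (a *s y) = cnj a * ninner x y"
  by (simp add: ninner_def sum_distrib_left algebra_simps)

lemma ninner_commute: "ninner y x = cnj (ninner x y)"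
  by (simp add: ninner_def mult.commute)

lemma ninner_zero_left [simp]: "ninner 0 y = 0" by (simp add: ninner_def)
lemma ninner_zero_right [simp]: "ninner x 0 = 0" by (simp add: ninner_def)

lemma ninner_minus_left: "ninner (- x) y = - ninner x y"
  by (simp add: ninner_def sum_negf)

lemma ninner_diff_left: "ninner (x - y) z = ninner x z - ninner y z"
  by (simp add: ninner_def left_diff_distrib sum_subtractf)

lemma ninner_sum_left: "ninner (\<Sum>i\<in>S. f i) y = (\<Sum>i\<in>S. ninner (f i) y)"
  by (induction S rule: infinite_finite_induct) (auto simp: ninner_add_left)

lemma ninner_sum_right: "ninner y (\<Sum>i\<in>S. f i) = (\<Sum>i\<in>S. ninner y (f i))"
  by (induction S rule: infinite_finite_induct) (auto simp: ninner_add_right)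

lemma ninner_sum_scale:
  "ninner (\<Sum>j\<in>S. a j *s Y j) (\<Sum>k\<in>T. b k *s Z k) =
      (\<Sum>j\<in>S. \<Sum>k\<in>T. a j * cnj (b k) * ninner (Y j) (Z k))"
  by (simp add: ninner_sum_left ninner_sum_right ninner_scale_left ninner_scale_right
      sum_distrib_left mult.assoc) (subst sum.swap, simp add: mult.left_commute)

lemma ninner_axis_right: "ninner x (axis i 1) = x $ i"
proof -
  have "ninner x (axis i 1) = (\<Sum>j\<in>UNIV. if j = i then x $ i else 0)"
    unfolding ninner_def by (intro sum.cong) (auto simp: axis_def)
  then show ?thesis by simp
qed

lemma norm_vec_sq: "(norm (x::complex^'n))\<^sup>2 = (\<Sum>i\<in>UNIV. (cmod (x $ i))\<^sup>2)"
  unfolding norm_vec_def L2_set_def by (simp add: sum_nonneg)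

lemma ninner_self: "ninner x x = complex_of_real ((norm x)\<^sup>2)"
proof -
  have "ninner x x = (\<Sum>i\<in>UNIV. complex_of_real ((cmod (x $ i))\<^sup>2))"
    unfolding ninner_def by (intro sum.cong refl) (rule complex_norm_square[symmetric])
  then show ?thesis by (simp add: norm_vec_sq del: of_real_power)
qed

lemma ninner_self_Re: "Re (ninner x x) = (norm x)\<^sup>2"
  by (simp add: ninner_self del: of_real_power)

lemma norm_vector_smult: "norm (c *s (x::complex^'n)) = cmod c * norm x"
proof -
  have "(norm (c *s x))\<^sup>2 = (cmod c * norm x)\<^sup>2"
    by (simp add: norm_vec_sq norm_mult power_mult_distrib sum_distrib_left)
  then show ?thesis by (simp add: power2_eq_iff_nonneg)
qed

lemma ninner_cauchy_schwarz: "cmod (ninner x y) \<le> norm x * norm y"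
proof -
  have "cmod (ninner x y) \<le> (\<Sum>i\<in>UNIV. cmod (x $ i) * cmod (y $ i))"
    unfolding ninner_def by (rule order_trans[OF norm_sum]) (simp add: norm_mult)
  also have "\<dots> \<le> L2_set (\<lambda>i. cmod (x $ i)) UNIV * L2_set (\<lambda>i. cmod (y $ i)) UNIV"
    using L2_set_mult_ineq[of "\<lambda>i. cmod (x $ i)" "\<lambda>i. cmod (y $ i)" UNIV] by simp
  finally show ?thesis by (simp add: norm_vec_def)
qed

lemma cadj_mult: "cadj (X ** Y) = cadj Y ** cadj X"
  by (simp add: cadj_def matrix_matrix_mult_def vec_eq_iff mult.commute)

lemma cadj_add: "cadj (X + Y) = cadj X + cadj Y"
  by (simp add: cadj_def vec_eq_iff)

lemma cadj_diff: "cadj (X - Y) = cadj X - cadj Y"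
  by (simp add: cadj_def vec_eq_iff)

lemma cadj_minus: "cadj (- X) = - cadj X"
  by (simp add: cadj_def vec_eq_iff)

lemma cadj_mat: "cadj (mat z) = mat (cnj z)"
  by (simp add: cadj_def vec_eq_iff mat_def)

lemma ninner_matrix_left: "ninner (X *v x) y = ninner x (cadj X *v y)"
proof -
  have "ninner (X *v x) y = (\<Sum>i\<in>UNIV. \<Sum>j\<in>UNIV. X $ i $ j * x $ j * cnj (y $ i))"
    unfolding ninner_def matrix_vector_mult_def by (simp add: sum_distrib_right)
  also have "\<dots> = (\<Sum>j\<in>UNIV. \<Sum>i\<in>UNIV. X $ i $ j * x $ j * cnj (y $ i))"
    by (rule sum.swap)
  also have "\<dots> = ninner x (cadj X *v y)"
    unfolding ninner_def matrix_vector_mult_def cadj_def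
    by (simp add: sum_distrib_left algebra_simps)
  finally show ?thesis .
qed

lemma mat_vector_mult: "mat z *v x = z *s (x::complex^'n)"
proof -
  have "(\<Sum>j\<in>UNIV. (if i = j then z else 0) * x $ j) =
      (\<Sum>j\<in>UNIV. if j = i then z * x $ i else 0)" for i
    by (rule sum.cong) auto
  then show ?thesis by (simp add: vec_eq_iff matrix_vector_mult_def mat_def)
qed

lemma matrix_inv_det_nonzero:
  assumes "det (X::complex^'n^'n) \<noteq> 0"
  shows "X ** matrix_inv X = mat 1 \<and> matrix_inv X ** X = mat 1"
proof -
  have "invertible X" using assms invertible_det_nz by blast
  then show ?thesis unfolding invertible_def matrix_inv_def by (rule someI_ex)
qed

lemma det_nonzero_of_left_inverse:
  assumes "(Y::complex^'n^'n) ** X = mat 1"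
  shows "det X \<noteq> 0"
proof -
  have "X ** Y = mat 1" using assms matrix_left_right_inverse by blast
  then have "invertible X" unfolding invertible_def using assms by blast
  then show ?thesis using invertible_det_nz by blast
qed

lemma det_nonzero_of_inj:
  assumes "\<And>x. (X::complex^'n^'n) *v x = 0 \<Longrightarrow> x = 0"
  shows "det X \<noteq> 0"
  using assms matrix_left_invertible_ker det_nonzero_of_left_inverse by blast

lemma matrix_inv_cadj:
  assumes "det (X::complex^'n^'n) \<noteq> 0"
  shows "matrix_inv (cadj X) = cadj (matrix_inv X)"
proof -
  have left: "cadj (matrix_inv X) ** cadj X = mat 1"
    using matrix_inv_det_nonzero[OF assms] by (metis cadj_mult cadj_mat complex_cnj_one)
  then have "det (cadj X) \<noteq> 0" by (rule det_nonzero_of_left_inverse)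
  then have right: "cadj X ** matrix_inv (cadj X) = mat 1" using matrix_inv_det_nonzero by blast
  have "matrix_inv (cadj X) = (cadj (matrix_inv X) ** cadj X) ** matrix_inv (cadj X)"
    by (simp add: left)
  also have "\<dots> = cadj (matrix_inv X)" by (simp add: matrix_mul_assoc[symmetric] right)
  finally show ?thesis .
qed

lemma matrix_mul_rneg: "(X::'a::ring_1^'n^'m) ** (- Y) = - (X ** Y)"
  by (simp add: matrix_matrix_mult_def vec_eq_iff sum_negf)

lemma det_holomorphic:
  fixes F :: "complex \<Rightarrow> complex^'n^'n"
  assumes "\<And>i j. (\<lambda>z. F z $ i $ j) holomorphic_on S"
  shows "(\<lambda>z. det (F z)) holomorphic_on S"
  unfolding det_def by (intro holomorphic_intros assms)

lemma tendsto_matrix_mult_entry: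
  fixes X Y :: "complex \<Rightarrow> complex^'n^'n"
  assumes "\<And>i j. ((\<lambda>w. X w $ i $ j) \<longlongrightarrow> X0 $ i $ j) F"
      and "\<And>i j. ((\<lambda>w. Y w $ i $ j) \<longlongrightarrow> Y0 $ i $ j) F"
  shows "((\<lambda>w. (X w ** Y w) $ a $ b) \<longlongrightarrow> (X0 ** Y0) $ a $ b) F"
  unfolding matrix_matrix_mult_def by (simp, intro tendsto_intros assms)

lemma matrix_sub_ldistrib: "(A::'a::ring_1^'n^'m) ** (B - C) = A ** B - A ** C"
  by (simp add: matrix_matrix_mult_def vec_eq_iff sum_subtractf right_diff_distrib)

lemma matrix_sub_rdistrib: "((B::'a::ring_1^'n^'m) - C) ** A = B ** A - C ** A"
  by (simp add: matrix_matrix_mult_def vec_eq_iff sum_subtractf left_diff_distrib)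

lemma matrix_mult_scaled_middle:
  "(X ** (\<chi> i j. c * Y $ i $ j) ** Z) $ a $ b = c * ((X ** Y ** Z) $ a $ b)"
  for X Y Z :: "'a::comm_ring_1^'n^'n"
  by (simp add: matrix_matrix_mult_def sum_distrib_left sum_distrib_right mult.assoc
      mult.left_commute)

lemma vec_nontrivial_relation:
  fixes p :: "nat \<Rightarrow> 'a::field^'n"
  shows "\<exists>c. (\<exists>l<Suc CARD('n). c l \<noteq> 0) \<and> (\<Sum>l<Suc CARD('n). c l *s p l) = 0"
proof (cases "inj_on p {..<Suc CARD('n)}")
  case False
  then obtain l1 l2 where l: "l1 < Suc CARD('n)" "l2 < Suc CARD('n)" "l1 \<noteq> l2" "p l1 = p l2"
    unfolding inj_on_def by auto
  define c :: "nat \<Rightarrow> 'a" where "c l = (if l = l1 then 1 else if l = l2 then -1 else 0)" for l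
  have "(\<Sum>l<Suc CARD('n). c l *s p l) = (\<Sum>l\<in>{l1, l2}. c l *s p l)"
    by (rule sum.mono_neutral_right) (use l in \<open>auto simp: c_def\<close>)
  also have "\<dots> = 0" using l by (simp add: c_def)
  finally show ?thesis using l by (intro exI[of _ c]) (auto simp: c_def)
next
  case True
  define P where "P = p ` {..<Suc CARD('n)}"
  have cP: "card P = Suc CARD('n)" unfolding P_def using True by (simp add: card_image)
  have "vec.dependent P"
  proof (rule ccontr)
    assume "\<not> vec.dependent P"
    then have "card P \<le> vec.dim P" using vec.independent_bound_general by blast
    also have "\<dots> \<le> CARD('n)" by (rule dim_subset_UNIV_cart_gen)
    finally show False using cP by simp
  qed
  then obtain T U where T: "finite T" "T \<subseteq> P" "(\<Sum>v\<in>T. U v *s v) = 0" "\<exists>v\<in>T. U v \<noteq> 0"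
    unfolding vec.dependent_explicit by blast
  define c where "c l = (if p l \<in> T then U (p l) else 0)" for l
  have "(\<Sum>l<Suc CARD('n). c l *s p l) = (\<Sum>v\<in>P. (if v \<in> T then U v else 0) *s v)"
    unfolding P_def c_def by (subst sum.reindex[OF True]) simp
  also have "\<dots> = (\<Sum>v\<in>T. U v *s v)"
    using T(1,2) by (intro sum.mono_neutral_cong_right) (auto simp: P_def)
  finally have s0: "(\<Sum>l<Suc CARD('n). c l *s p l) = 0" using T(3) by simp
  obtain v where v: "v \<in> T" "U v \<noteq> 0" using T(4) by blast
  then obtain l where "l < Suc CARD('n)" "p l = v" using T(2) by (auto simp: P_def)
  then have "\<exists>l<Suc CARD('n). c l \<noteq> 0" using v by (intro exI[of _ l]) (auto simp: c_def)
  then show ?thesis using s0 by blast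
qed

lemma matrix_vector_mult_minus_lhs: "(- (X::'a::ring_1^'n^'m)) *v x = - (X *v x)"
  by (simp add: matrix_vector_mult_def vec_eq_iff sum_negf)

section \<open>The transfer function\<close>

locale transfer_function = selfadjoint_operator DA A for DA :: "'a::chilbert set" and A +
  fixes B :: "'a \<Rightarrow> complex^'n" and Bs :: "complex^'n \<Rightarrow> 'a" and D :: "complex^'n^'n"
  assumes B_bounded: "bounded_op B" and B_adjoint: "is_adjoint B Bs" and D_hermitian: "cadj D = D"
begin

lemma B_add: "B (x + y) = B x + B y" and B_scale: "B (a *\<^sub>C x) = a *s B x"
  using B_bounded unfolding bounded_op_def by blast+

lemma B_diff: "B (x - y) = B x - B y"
  using B_add[of x "(-1) *\<^sub>C y"] B_scale[of "-1" y]
  by (simp add: cscale_minus_left vector_sneg_minus1[symmetric])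

lemma ninner_B: "ninner (B x) f = cinner x (Bs f)"
  using B_adjoint unfolding is_adjoint_def by blast

lemma B_component: "B x $ i = cinner x (Bs (axis i 1))"
  using ninner_B[of x "axis i 1"] by (simp add: ninner_axis_right)

lemma Bs_add: "Bs (f + g) = Bs f + Bs g"
proof -
  have "cinner x (Bs (f + g) - (Bs f + Bs g)) = 0" for x
    using ninner_B[of x "f + g"] ninner_B[of x f] ninner_B[of x g]
    by (simp add: cinner_diff_right cinner_add_right ninner_add_right)
  from this[of "Bs (f + g) - (Bs f + Bs g)"] show ?thesis by simp
qed

lemma Bs_scale: "Bs (a *s f) = a *\<^sub>C Bs f"
proof -
  have "cinner x (Bs (a *s f) - a *\<^sub>C Bs f) = 0" for x
    using ninner_B[of x "a *s f"] ninner_B[of x f]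
    by (simp add: cinner_diff_right cinner_cscale_right ninner_scale_right)
  from this[of "Bs (a *s f) - a *\<^sub>C Bs f"] show ?thesis by simp
qed

lemma Bs_sum: "Bs (\<Sum>i\<in>S. f i) = (\<Sum>i\<in>S. Bs (f i))"
  by (induction S rule: infinite_finite_induct) (auto simp: Bs_add Bs_scale[of 0 0, simplified])

lemma Bs_expand: "Bs x = (\<Sum>j\<in>UNIV. x $ j *\<^sub>C Bs (axis j 1))"
  by (subst basis_expansion[symmetric, of x]) (simp add: Bs_sum Bs_scale)

definition KB :: real where "KB = (SOME K. K > 0 \<and> (\<forall>x. norm (B x) \<le> K * norm x))"

lemma KB_pos: "KB > 0" and norm_B_le: "norm (B x) \<le> KB * norm x"
proof -
  obtain K where K: "\<forall>x. norm (B x) \<le> K * norm x" using B_bounded unfolding bounded_op_def by blast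
  have "\<forall>x. norm (B x) \<le> max K 1 * norm x"
    using K by (meson max.cobounded1 mult_right_mono norm_ge_zero order_trans)
  then have "\<exists>K. K > 0 \<and> (\<forall>x. norm (B x) \<le> K * norm x)" by (intro exI[of _ "max K 1"]) auto
  from someI_ex[OF this] show "KB > 0" "norm (B x) \<le> KB * norm x" unfolding KB_def by auto
qed

lemma norm_Bs_le: "norm (Bs f) \<le> KB * norm f"
proof -
  have "(norm (Bs f))\<^sup>2 = cmod (ninner (B (Bs f)) f)"
    by (simp add: ninner_B cinner_self_norm norm_power)
  also have "\<dots> \<le> KB * norm (Bs f) * norm f"
    using ninner_cauchy_schwarz[of "B (Bs f)" f] norm_B_le[of "Bs f"]
    by (meson mult_right_mono norm_ge_zero order_trans)
  finally show ?thesis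
    using KB_pos by (cases "Bs f = 0") (auto simp: power2_eq_square mult_le_cancel_left)
qed

definition sandwich :: "('a \<Rightarrow> 'a) \<Rightarrow> complex^'n^'n" where
  "sandwich T = (\<chi> i j. B (T (Bs (axis j 1))) $ i)"

lemma sandwich_mult:
  assumes add: "\<And>x y. T (x + y) = T x + T y" and scale: "\<And>a x. T (a *\<^sub>C x) = a *\<^sub>C T x"
  shows "sandwich T *v x = B (T (Bs x))"
proof -
  have T_sum: "T (\<Sum>j\<in>S. f j) = (\<Sum>j\<in>S. T (f j))" for S and f :: "'n \<Rightarrow> 'a"
    by (induction S rule: infinite_finite_induct) (auto simp: add scale[of 0 0, simplified])
  have "(sandwich T *v x) $ i = B (T (Bs x)) $ i" for i
  proof -
    have "(sandwich T *v x) $ i = (\<Sum>j\<in>UNIV. cinner (x $ j *\<^sub>C T (Bs (axis j 1))) (Bs (axis i 1)))"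
      unfolding sandwich_def matrix_vector_mult_def
      by (simp add: B_component cinner_cscale_left mult.commute)
    also have "\<dots> = cinner (T (Bs x)) (Bs (axis i 1))"
      by (simp add: Bs_expand[of x] T_sum scale cinner_sum_left)
    finally show ?thesis by (simp add: B_component)
  qed
  then show ?thesis by (simp add: vec_eq_iff)
qed

lemma sandwich_resolvent_mult: "Im z \<noteq> 0 \<Longrightarrow> sandwich (R z) *v x = B (R z (Bs x))"
  by (rule sandwich_mult) (simp_all add: resolvent_add resolvent_cscale)

lemma sandwich_resolvent_entry: "sandwich (R z) $ i $ j =
    cinner (R z (Bs (axis j 1))) (Bs (axis i 1))"
  by (simp add: sandwich_def B_component)

lemma cadj_sandwich_resolvent: "Im z \<noteq> 0 \<Longrightarrow> cadj (sandwich (R z)) = sandwich (R (cnj z))"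
  unfolding cadj_def vec_eq_iff
  by (simp add: sandwich_resolvent_entry cinner_commute[of "R z _"] resolvent_adjoint)

definition M :: "complex \<Rightarrow> complex^'n^'n" where
  "M z = D + sandwich (R z) - mat z"

definition W :: "complex \<Rightarrow> complex^'n^'n" where
  "W z = matrix_inv (M z)"

abbreviation V where "V \<equiv> transfer_fun DA A B Bs D"

lemma V_eq: "V z = - W z"
  unfolding transfer_fun_def W_def M_def sandwich_def by simp

lemma M_entry: "M z $ i $ j = D $ i $ j + sandwich (R z) $ i $ j - (if i = j then z else 0)"
  by (simp add: M_def mat_def)

lemma M_mult: "Im z \<noteq> 0 \<Longrightarrow> M z *v x = D *v x + B (R z (Bs x)) - z *s x"
  by (simp add: M_def matrix_vector_mult_add_rdistrib matrix_vector_mult_diff_rdistrib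
      sandwich_resolvent_mult mat_vector_mult)

lemma cadj_M: "Im z \<noteq> 0 \<Longrightarrow> cadj (M z) = M (cnj z)"
  by (simp add: M_def cadj_add cadj_diff cadj_sandwich_resolvent D_hermitian cadj_mat)

lemma M_mult_W: "det (M z) \<noteq> 0 \<Longrightarrow> M z ** W z = mat 1"
  and W_mult_M: "det (M z) \<noteq> 0 \<Longrightarrow> W z ** M z = mat 1"
  unfolding W_def using matrix_inv_det_nonzero by blast+

lemma Im_ninner_D_self: "Im (ninner (D *v x) x) = 0"
proof -
  have "ninner (D *v x) x = cnj (ninner (D *v x) x)"
    using ninner_matrix_left[of D x x] ninner_commute[of x "D *v x"] D_hermitian by simp
  then show ?thesis by (metis cnj.sel(2) neg_equal_zero)
qed

lemma Im_ninner_M: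
  assumes z: "Im z \<noteq> 0"
  shows "Im (ninner (M z *v x) x) = Im z * ((norm (R z (Bs x)))\<^sup>2 - (norm x)\<^sup>2)"
  using Im_ninner_D_self[of x] Im_cinner_resolvent[OF z, of "Bs x"]
  by (simp add: M_mult[OF z] ninner_add_left ninner_diff_left ninner_B ninner_scale_left
      ninner_self algebra_simps del: of_real_power)

lemma norm_resolvent_Bs_le: "Im z \<noteq> 0 \<Longrightarrow> norm (R z (Bs f)) \<le> KB * norm f / \<bar>Im z\<bar>"
  using norm_resolvent_le[of z "Bs f"] norm_Bs_le[of f]
  by (meson abs_ge_zero divide_right_mono order_trans)

lemma norm_resolvent_Bs_less:
  assumes z: "\<bar>Im z\<bar> > KB" and "v \<noteq> 0"
  shows "norm (R z (Bs v)) < norm v"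
proof -
  have "norm (R z (Bs v)) \<le> KB * norm v / \<bar>Im z\<bar>"
    using z KB_pos by (intro norm_resolvent_Bs_le) auto
  also have "\<dots> < norm v" using assms KB_pos by (simp add: field_simps)
  finally show ?thesis .
qed

lemma det_M_nonzero:
  assumes z: "\<bar>Im z\<bar> > KB"
  shows "det (M z) \<noteq> 0"
proof (rule det_nonzero_of_inj)
  fix x assume "M z *v x = 0"
  moreover have "Im z \<noteq> 0" using z KB_pos by auto
  ultimately have "norm (R z (Bs x)) = norm x" using Im_ninner_M[of z x] by simp
  then show "x = 0" using norm_resolvent_Bs_less[OF z] by fastforce
qed

lemma M_entry_holomorphic: "(\<lambda>z. M z $ i $ j) holomorphic_on (- \<real>)"
  unfolding M_entry sandwich_resolvent_entry
  by (cases "i = j") (simp_all add: holomorphic_intros cinner_resolvent_holomorphic)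

lemma det_M_holomorphic: "(\<lambda>z. det (M z)) holomorphic_on (- \<real>)"
  by (rule det_holomorphic[OF M_entry_holomorphic])

lemma eventually_det_M_nonzero:
  assumes z0: "Im z0 \<noteq> 0"
  shows "eventually (\<lambda>w. det (M w) \<noteq> 0) (at z0)"
proof (rule ccontr)
  \<comment> \<open>det M is holomorphic on the open half-plane of z0 and nonzero far from the real axis\<close>
  assume "\<not> eventually (\<lambda>w. det (M w) \<noteq> 0) (at z0)"
  then have lim: "z0 islimpt {w. det (M w) = 0}" by (simp add: islimpt_iff_eventually)
  define S where "S = {w. 0 < Im w * Im z0}"
  define p where "p = \<i> * complex_of_real (sgn (Im z0) * (KB + 1))"
  have S: "open S" "connected S" "S \<subseteq> - \<real>" "z0 \<in> S" "p \<in> S"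
  proof -
    have "S = (if Im z0 > 0 then {w. Im w > 0} else {w. Im w < 0})"
      using z0 by (auto simp: S_def zero_less_mult_iff)
    then show "open S" "connected S"
      by (simp_all add: open_halfspace_Im_gt open_halfspace_Im_lt convex_connected
          convex_halfspace_Im_gt convex_halfspace_Im_lt)
    show "S \<subseteq> - \<real>" by (auto simp: S_def complex_is_Real_iff)
    show "z0 \<in> S" using z0 by (simp add: S_def not_sum_power2_lt_zero power2_eq_square[symmetric])
    have "0 < (KB + 1) * (sgn (Im z0) * Im z0)" using z0 KB_pos
      by (simp add: abs_sgn[symmetric] mult.commute)
    then show "p \<in> S" by (simp add: S_def p_def algebra_simps)
  qed
  have "z0 islimpt {w. det (M w) = 0} \<inter> S"
    using lim S(1,4) by (intro islimpt_Int_eventually) (auto intro: eventually_at_in_open')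
  then have "det (M p) = 0"
    using analytic_continuation[OF holomorphic_on_subset[OF det_M_holomorphic S(3)] S(1,2) _ S(4)]
      S(5) by blast
  moreover have "\<bar>Im p\<bar> > KB" using z0 KB_pos by (simp add: p_def abs_mult abs_sgn_eq)
  ultimately show False using det_M_nonzero by blast
qed

definition cramer_numerator :: "'n \<Rightarrow> 'n \<Rightarrow> complex \<Rightarrow> complex" where
  "cramer_numerator k j z = det (\<chi> a b. if b = k then axis j 1 $ a else M z $ a $ b)"

lemma cramer_numerator_holomorphic: "cramer_numerator k j holomorphic_on (- \<real>)"
  unfolding cramer_numerator_def
proof (rule det_holomorphic)
  show "(\<lambda>z. (\<chi> a b. if b = k then axis j 1 $ a else M z $ a $ b) $ a $ b)
      holomorphic_on - \<real>" for a b
    by (cases "b = k") (simp_all add: M_entry_holomorphic)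
qed

lemma W_entry_cramer:
  assumes "det (M z) \<noteq> 0"
  shows "W z $ k $ j = cramer_numerator k j z / det (M z)"
proof -
  have "M z *v (\<chi> k. W z $ k $ j) = axis j 1"
    using M_mult_W[OF assms]
    by (auto simp: vec_eq_iff matrix_matrix_mult_def matrix_vector_mult_def mat_def axis_def
        dest!: arg_cong[where f="\<lambda>X. X $ _ $ j"])
  then have "(\<chi> k. W z $ k $ j) = (\<chi> k. cramer_numerator k j z / det (M z))"
    unfolding cramer[OF assms] cramer_numerator_def by simp
  then show ?thesis by (metis vec_lambda_beta)
qed

lemma V_entry_eq: "det (M z) \<noteq> 0 \<Longrightarrow> entry V i j z = - (cramer_numerator i j z / det (M z))"
  by (simp add: entry_def V_eq W_entry_cramer)

lemma V_analytic:
  assumes "Im z \<noteq> 0" "det (M z) \<noteq> 0"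
  shows "entry V i j analytic_on {z}"
proof -
  define U where "U = - \<real> \<inter> (\<lambda>w. det (M w)) -` (- {0})"
  have U: "open U" "z \<in> U" "U \<subseteq> - \<real>"
    unfolding U_def using assms
    by (auto intro!: continuous_open_preimage holomorphic_on_imp_continuous_on det_M_holomorphic
        open_Compl closed_complex_Reals simp: complex_is_Real_iff)
  have "(\<lambda>w. - (cramer_numerator i j w / det (M w))) holomorphic_on U"
    using U(3) by (intro holomorphic_intros holomorphic_on_subset[OF cramer_numerator_holomorphic]
        holomorphic_on_subset[OF det_M_holomorphic]) (auto simp: U_def)
  then have "entry V i j holomorphic_on U"
    by (rule holomorphic_transform) (simp add: U_def V_entry_eq)
  then show ?thesis using U(1,2) analytic_on_open analytic_on_subset by blast
qed

lemma det_M_nonzero_if_V_analytic: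
  assumes z0: "Im z0 \<noteq> 0" and V: "\<And>i j. entry V i j analytic_on {z0}"
  shows "det (M z0) \<noteq> 0"
proof -
  \<comment> \<open>M w ** V w = - 1 near z0, and both factors are continuous at z0\<close>
  have M_lim: "((\<lambda>w. M w $ i $ j) \<longlongrightarrow> M z0 $ i $ j) (at z0)" for i j
    using holomorphic_on_imp_continuous_on[OF M_entry_holomorphic, of i j] z0
      open_Compl[OF closed_complex_Reals]
    by (simp add: continuous_on_eq_continuous_at complex_is_Real_iff isCont_def)
  have V_lim: "((\<lambda>w. V w $ i $ j) \<longlongrightarrow> V z0 $ i $ j) (at z0)" for i j
    using analytic_at_imp_isCont[OF V[of i j]] by (simp add: isCont_def entry_def)
  have "eventually (\<lambda>w. (M w ** V w) $ a $ b = (- mat 1 :: complex^'n^'n) $ a $ b) (at z0)" for a b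
    using eventually_det_M_nonzero[OF z0]
    by (rule eventually_mono) (simp add: V_eq matrix_mul_rneg M_mult_W)
  then have "(M z0 ** V z0) $ a $ b = (- mat 1 :: complex^'n^'n) $ a $ b" for a b
    by (rule tendsto_unique[OF trivial_limit_at tendsto_matrix_mult_entry[OF M_lim V_lim]
          tendsto_eventually])
  then have "M z0 ** W z0 = mat 1" by (simp add: vec_eq_iff V_eq matrix_mul_rneg)
  then show ?thesis using det_nonzero_of_left_inverse matrix_left_right_inverse by blast
qed

lemma holdom_eq: "holdom V = {z. Im z \<noteq> 0 \<and> det (M z) \<noteq> 0}"
  using V_analytic det_M_nonzero_if_V_analytic by (auto simp: holdom_def complex_is_Real_iff)

lemma V_meromorphic: "entry V i j meromorphic_on (- \<real>)"
  unfolding meromorphic_on_def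
proof
  fix z0 :: complex assume "z0 \<in> - \<real>"
  then have z0: "Im z0 \<noteq> 0" by (simp add: complex_is_Real_iff)
  have "cramer_numerator i j analytic_on {z0}" "(\<lambda>w. det (M w)) analytic_on {z0}"
    using cramer_numerator_holomorphic det_M_holomorphic \<open>z0 \<in> - \<real>\<close>
    by (auto simp: analytic_on_open[OF open_Compl[OF closed_complex_Reals], symmetric]
        intro: analytic_on_subset)
  then have "(\<lambda>w. - (cramer_numerator i j w / det (M w))) meromorphic_on {z0}"
    by (intro meromorphic_on_uminus meromorphic_on_divide analytic_on_imp_meromorphic_on)
  moreover have "eventually (\<lambda>w. entry V i j w = - (cramer_numerator i j w / det (M w))) (at z0)"
    using eventually_det_M_nonzero[OF z0] by (rule eventually_mono) (rule V_entry_eq)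
  ultimately have "entry V i j meromorphic_on {z0}"
    using meromorphic_on_cong[of "{z0}" "entry V i j" _ "{z0}"] by simp
  then show "\<exists>F. (\<lambda>w. entry V i j (z0 + w)) has_laurent_expansion F"
    unfolding meromorphic_on_def by simp
qed

lemma holdom_cnj:
  assumes "z \<in> holdom V"
  shows "cnj z \<in> holdom V" "V (cnj z) = cadj (V z)"
proof -
  have z: "Im z \<noteq> 0" "det (M z) \<noteq> 0" using assms by (simp_all add: holdom_eq)
  have "cadj (W z) ** M (cnj z) = mat 1"
    using arg_cong[OF M_mult_W[OF z(2)], of cadj] by (simp add: cadj_mult cadj_mat cadj_M[OF z(1)])
  then have "det (M (cnj z)) \<noteq> 0" by (rule det_nonzero_of_left_inverse)
  then show "cnj z \<in> holdom V" using z by (simp add: holdom_eq)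
  have "W (cnj z) = cadj (W z)"
    unfolding W_def cadj_M[OF z(1), symmetric] by (rule matrix_inv_cadj[OF z(2)])
  then show "V (cnj z) = cadj (V z)" by (simp add: V_eq cadj_minus)
qed

end

section \<open>The kernel N_V and its negative squares\<close>

context transfer_function
begin

definition E :: "complex \<Rightarrow> complex \<Rightarrow> complex^'n^'n" where
  "E z \<zeta> = sandwich (\<lambda>u. R (cnj z) (R \<zeta> u)) - mat 1"

lemma ninner_E:
  assumes z: "Im z \<noteq> 0" and \<zeta>: "Im \<zeta> \<noteq> 0"
  shows "ninner (E z \<zeta> *v a) b = cinner (R (cnj z) (Bs a)) (R (cnj \<zeta>) (Bs b)) - ninner a b"
proof -
  have z': "Im (cnj z) \<noteq> 0" using z by simp
  have "E z \<zeta> *v a = B (R (cnj z) (R \<zeta> (Bs a))) - a"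
    unfolding E_def matrix_vector_mult_diff_rdistrib
    by (subst sandwich_mult) (simp_all add: resolvent_add[OF \<zeta>] resolvent_cscale[OF \<zeta>]
        resolvent_add[OF z'] resolvent_cscale[OF z'])
  then have "ninner (E z \<zeta> *v a) b = cinner (R \<zeta> (R (cnj z) (Bs a))) (Bs b) - ninner a b"
    by (simp add: ninner_diff_left ninner_B resolvent_commute[OF z' \<zeta>])
  then show ?thesis by (simp add: resolvent_adjoint[OF \<zeta>])
qed

lemma E_entry_tendsto:
  assumes \<zeta>: "Im \<zeta> \<noteq> 0" and z: "Im z \<noteq> 0"
  shows "((\<lambda>w. E z w $ a $ b) \<longlongrightarrow> E z \<zeta> $ a $ b) (at \<zeta>)"
proof -
  have "E z w $ a $ b =
      cinner (R w (Bs (axis b 1))) (R z (Bs (axis a 1))) - (if a = b then 1 else 0)"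
    for w
    using resolvent_adjoint[of "cnj z" "R w (Bs (axis b 1))" "Bs (axis a 1)"] z
    by (simp add: E_def sandwich_def B_component mat_def)
  then show ?thesis by (simp only:) (intro tendsto_intros resolvent_tendsto \<zeta>)
qed

lemma M_diff_cadj_M:
  assumes z: "Im z \<noteq> 0" and \<zeta>: "Im \<zeta> \<noteq> 0"
  shows "M \<zeta> - cadj (M z) = (\<chi> i j. (\<zeta> - cnj z) * E z \<zeta> $ i $ j)"
proof -
  have z': "Im (cnj z) \<noteq> 0" using z by simp
  have "(M \<zeta> - M (cnj z)) $ i $ j = (\<zeta> - cnj z) * E z \<zeta> $ i $ j" for i j
  proof -
    define b where "b = Bs (axis j 1)"
    have "R \<zeta> b - R (cnj z) b = (\<zeta> - cnj z) *\<^sub>C R (cnj z) (R \<zeta> b)"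
      using resolvent_identity[OF \<zeta> z', of b] resolvent_commute[OF \<zeta> z', of b] by simp
    then have "B (R \<zeta> b) - B (R (cnj z) b) = (\<zeta> - cnj z) *s B (R (cnj z) (R \<zeta> b))"
      by (simp add: B_diff[symmetric] B_scale)
    then have "B (R \<zeta> b) $ i - B (R (cnj z) b) $ i = (\<zeta> - cnj z) * B (R (cnj z) (R \<zeta> b)) $ i"
      by (simp add: vec_eq_iff left_diff_distrib)
    then show ?thesis
      by (simp add: M_def E_def sandwich_def mat_def b_def algebra_simps)
  qed
  then show ?thesis by (simp add: cadj_M[OF z] vec_eq_iff)
qed

lemma NV_off_diagonal:
  assumes z: "z \<in> holdom V" and \<zeta>: "\<zeta> \<in> holdom V" and ne: "\<zeta> \<noteq> cnj z"
  shows "NV V z \<zeta> = W \<zeta> ** E z \<zeta> ** cadj (W z)"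
proof -
  have z0: "Im z \<noteq> 0" "det (M z) \<noteq> 0" and \<zeta>0: "Im \<zeta> \<noteq> 0" "det (M \<zeta>) \<noteq> 0"
    using z \<zeta> by (simp_all add: holdom_eq)
  have "cadj (M z) ** cadj (W z) = mat 1"
    using arg_cong[OF W_mult_M[OF z0(2)], of cadj] by (simp add: cadj_mult cadj_mat)
  then have "W \<zeta> ** (M \<zeta> - cadj (M z)) ** cadj (W z) = cadj (W z) - W \<zeta>"
    by (simp add: matrix_sub_ldistrib matrix_sub_rdistrib matrix_mul_assoc[symmetric])
       (simp add: matrix_mul_assoc W_mult_M[OF \<zeta>0(2)])
  then have "(\<zeta> - cnj z) * ((W \<zeta> ** E z \<zeta> ** cadj (W z)) $ i $ j) = (cadj (W z) - W \<zeta>) $ i $ j"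
    for i j
    using matrix_mult_scaled_middle[of "W \<zeta>" "\<zeta> - cnj z" "E z \<zeta>" "cadj (W z)" i j]
    by (simp add: M_diff_cadj_M[OF z0(1) \<zeta>0(1)])
  moreover have "\<zeta> - cnj z \<noteq> 0" using ne by simp
  ultimately show ?thesis
    unfolding NV_def using ne by (simp add: vec_eq_iff V_eq cadj_def field_simps)
qed

lemma NV_diagonal:
  assumes z: "z \<in> holdom V"
  shows "NV V z (cnj z) = W (cnj z) ** E z (cnj z) ** cadj (W z)"
proof -
  define \<zeta> where "\<zeta> = cnj z"
  have z0: "Im z \<noteq> 0" using z by (simp add: holdom_eq)
  have \<zeta>: "\<zeta> \<in> holdom V" "V \<zeta> = cadj (V z)" using holdom_cnj[OF z] by (simp_all add: \<zeta>_def)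
  have \<zeta>0: "Im \<zeta> \<noteq> 0" using \<zeta>(1) by (simp add: holdom_eq)
  have V_an: "entry V i j analytic_on {\<zeta>}" for i j using \<zeta>(1) by (simp add: holdom_def)
  have "deriv (entry V i j) \<zeta> = (W \<zeta> ** E z \<zeta> ** cadj (W z)) $ i $ j" for i j
  proof -
    \<comment> \<open>the difference quotient of V at conj z is the off-diagonal value of the kernel\<close>
    have quotient: "((\<lambda>w. (entry V i j w - entry V i j \<zeta>) / (w - \<zeta>))
        \<longlongrightarrow> deriv (entry V i j) \<zeta>) (at \<zeta>)"
      using analytic_on_imp_differentiable_at[OF V_an] DERIV_deriv_iff_field_differentiable
        has_field_derivative_iff by blast
    have W_lim: "((\<lambda>w. W w $ a $ b) \<longlongrightarrow> W \<zeta> $ a $ b) (at \<zeta>)" for a b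
      using analytic_at_imp_isCont[OF V_an[of a b]]
      by (simp add: isCont_def entry_def V_eq tendsto_minus_cancel_left)
    have "eventually (\<lambda>w. (W w ** E z w ** cadj (W z)) $ i $ j
        = (entry V i j w - entry V i j \<zeta>) / (w - \<zeta>)) (at \<zeta>)"
      using eventually_det_M_nonzero[OF \<zeta>0] eventually_at_abs_Im_ge_half[OF \<zeta>0]
        eventually_neq_at_within[of \<zeta> \<zeta>]
    proof eventually_elim
      case (elim w)
      then have "w \<in> holdom V" using \<zeta>0 by (auto simp: holdom_eq)
      then have "(W w ** E z w ** cadj (W z)) $ i $ j = NV V z w $ i $ j"
        using NV_off_diagonal[OF z, of w] elim(3) by (simp add: \<zeta>_def)
      then show ?case
        using elim(3) \<zeta>(2) by (simp add: NV_def \<zeta>_def entry_def cadj_def)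
    qed
    then have "((\<lambda>w. (entry V i j w - entry V i j \<zeta>) / (w - \<zeta>))
        \<longlongrightarrow> (W \<zeta> ** E z \<zeta> ** cadj (W z)) $ i $ j) (at \<zeta>)"
      by (rule Lim_transform_eventually[rotated])
         (intro tendsto_matrix_mult_entry W_lim E_entry_tendsto \<zeta>0 z0 tendsto_const)
    then show ?thesis using tendsto_unique[OF trivial_limit_at quotient] by blast
  qed
  then show ?thesis unfolding NV_def \<zeta>_def[symmetric] by (simp add: vec_eq_iff)
qed

lemma NV_eq:
  assumes "z \<in> holdom V" "\<zeta> \<in> holdom V"
  shows "NV V z \<zeta> = W \<zeta> ** E z \<zeta> ** cadj (W z)"
  using NV_off_diagonal[OF assms] NV_diagonal[OF assms(1)] by (cases "\<zeta> = cnj z") auto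

lemma ninner_NV:
  assumes "z \<in> holdom V" "\<zeta> \<in> holdom V"
  shows "ninner (NV V z \<zeta> *v h) k
    = cinner (R (cnj z) (Bs (cadj (W z) *v h))) (R (cnj \<zeta>) (Bs (cadj (W \<zeta>) *v k)))
      - ninner (cadj (W z) *v h) (cadj (W \<zeta>) *v k)"
proof -
  have "ninner (NV V z \<zeta> *v h) k = ninner (E z \<zeta> *v (cadj (W z) *v h)) (cadj (W \<zeta>) *v k)"
    by (simp add: NV_eq[OF assms] matrix_vector_mul_assoc[symmetric] ninner_matrix_left)
  then show ?thesis using assms by (simp add: ninner_E holdom_eq)
qed

lemma Re_kform:
  assumes "\<forall>k<m. zs k \<in> holdom V"
  shows "Re (kform V m zs hs \<xi>) =
     (norm (\<Sum>j<m. \<xi> j *\<^sub>C R (cnj (zs j)) (Bs (cadj (W (zs j)) *v hs j))))\<^sup>2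
   - (norm (\<Sum>j<m. \<xi> j *s (cadj (W (zs j)) *v hs j)))\<^sup>2"
proof -
  define g where "g j = cadj (W (zs j)) *v hs j" for j
  define Y where "Y j = R (cnj (zs j)) (Bs (g j))" for j
  have "kform V m zs hs \<xi> =
      (\<Sum>j<m. \<Sum>k<m. (cinner (Y j) (Y k) - ninner (g j) (g k)) * \<xi> j * cnj (\<xi> k))"
    unfolding kform_def using assms by (intro sum.cong refl) (simp add: ninner_NV g_def Y_def)
  also have "\<dots> = cinner (\<Sum>j<m. \<xi> j *\<^sub>C Y j) (\<Sum>j<m. \<xi> j *\<^sub>C Y j)
            - ninner (\<Sum>j<m. \<xi> j *s g j) (\<Sum>j<m. \<xi> j *s g j)"
    unfolding cinner_sum_cscale ninner_sum_scale sum_subtractf[symmetric]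
    by (intro sum.cong refl) (simp add: algebra_simps)
  finally show ?thesis by (simp add: g_def Y_def cinner_self_norm ninner_self del: of_real_power)
qed

lemma not_neg_squares_ge_Suc_card:
  assumes "\<forall>k<m. zs k \<in> holdom V"
  shows "\<not> neg_squares_ge (kform V m zs hs) (Suc CARD('n))"
proof
  \<comment> \<open>the form is nonnegative on the kernel of the map into C^n, and that kernel
    meets every span of CARD('n) + 1 vectors\<close>
  assume "neg_squares_ge (kform V m zs hs) (Suc CARD('n))"
  then obtain u where u: "\<And>c. (\<exists>l<Suc CARD('n). c l \<noteq> 0) \<Longrightarrow>
      Re (kform V m zs hs (\<lambda>j. \<Sum>l<Suc CARD('n). c l * u l j)) < 0"
    unfolding neg_squares_ge_def by blast
  define g where "g j = cadj (W (zs j)) *v hs j" for j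
  obtain c where c: "\<exists>l<Suc CARD('n). c l \<noteq> 0"
    "(\<Sum>l<Suc CARD('n). c l *s (\<Sum>j<m. u l j *s g j)) = 0"
    using vec_nontrivial_relation[of "\<lambda>l. \<Sum>j<m. u l j *s g j"] by blast
  have "(\<Sum>j<m. (\<Sum>l<Suc CARD('n). c l * u l j) *s g j) =
      (\<Sum>l<Suc CARD('n). c l *s (\<Sum>j<m. u l j *s g j))"
    by (simp add: vec.scale_sum_right vector_smult_assoc sum_distrib_right
        vec.scale_sum_left sum.swap[of _ "{..<m}"])
  then have "Re (kform V m zs hs (\<lambda>j. \<Sum>l<Suc CARD('n). c l * u l j)) \<ge> 0"
    using c(2) unfolding Re_kform[OF assms] g_def by simp
  then show False using u[OF c(1)] by simp
qed

lemma neg_squares_ge_card: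
  "\<exists>m zs hs. (\<forall>k<m. zs k \<in> holdom V) \<and> neg_squares_ge (kform V m zs hs) CARD('n)"
proof -
  \<comment> \<open>all points equal to one z0 far from the axis, and hs chosen so that the
    vectors W(z0)* hs k are the unit vectors\<close>
  define n where "n = CARD('n)"
  define z0 where "z0 = \<i> * complex_of_real (KB + 1)"
  have z0: "z0 \<in> holdom V" "\<bar>Im (cnj z0)\<bar> > KB"
    using KB_pos det_M_nonzero[of z0] by (simp_all add: z0_def holdom_eq)
  obtain \<sigma> where "bij_betw \<sigma> {0..<n} (UNIV::'n set)"
    using ex_bij_betw_nat_finite[of "UNIV::'n set"] by (auto simp: n_def)
  then have \<sigma>: "inj_on \<sigma> {..<n}" by (simp add: bij_betw_def atLeast0LessThan)
  define hs where "hs k = cadj (M z0) *v axis (\<sigma> k) 1" for k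
  have "cadj (W z0) ** cadj (M z0) = mat 1"
    using arg_cong[OF M_mult_W, of z0 cadj] z0(1) by (simp add: holdom_eq cadj_mult cadj_mat)
  then have g: "cadj (W z0) *v hs k = axis (\<sigma> k) 1" for k
    by (simp add: hs_def matrix_vector_mul_assoc)
  define u :: "nat \<Rightarrow> nat \<Rightarrow> complex" where "u l j = (if l = j then 1 else 0)" for l j
  have "Re (kform V n (\<lambda>_. z0) hs (\<lambda>j. \<Sum>l<n. c l * u l j)) < 0" if c: "\<exists>l<n. c l \<noteq> 0" for c
  proof -
    define v where "v = (\<Sum>j<n. c j *s axis (\<sigma> j) 1)"
    have "(\<Sum>j<n. (\<Sum>l<n. c l * u l j) *s axis (\<sigma> j) 1) = v"
      unfolding v_def u_def by (intro sum.cong refl) (simp add: if_distrib cong: if_cong)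
    moreover have "(\<Sum>j<n. (\<Sum>l<n. c l * u l j) *\<^sub>C R (cnj z0) (Bs (axis (\<sigma> j) 1))) =
        R (cnj z0) (Bs v)"
    proof -
      have "Im (cnj z0) \<noteq> 0" using z0(2) KB_pos by auto
      then show ?thesis
        by (simp add: v_def u_def if_distrib Bs_sum Bs_scale resolvent_sum resolvent_cscale
            cong: if_cong)
    qed
    ultimately have "Re (kform V n (\<lambda>_. z0) hs (\<lambda>j. \<Sum>l<n. c l * u l j))
        = (norm (R (cnj z0) (Bs v)))\<^sup>2 - (norm v)\<^sup>2"
      using z0(1) by (simp add: Re_kform g)
    moreover obtain l where l: "l < n" "c l \<noteq> 0" using c by blast
    have "(\<Sum>j<n. if \<sigma> l = \<sigma> j then c j else 0) = (\<Sum>j<n. if j = l then c j else 0)"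
      using \<sigma> l(1) by (intro sum.cong refl) (auto simp: inj_on_def)
    then have "v $ \<sigma> l = c l"
      unfolding v_def sum_component using l(1) by (simp add: axis_def if_distrib cong: if_cong)
    then have "norm (R (cnj z0) (Bs v)) < norm v"
      using l(2) by (intro norm_resolvent_Bs_less[OF z0(2)]) auto
    ultimately show ?thesis by (simp add: power_strict_mono)
  qed
  then have "neg_squares_ge (kform V n (\<lambda>_. z0) hs) n"
    unfolding neg_squares_ge_def by blast
  then show ?thesis using z0(1) unfolding n_def
    by (intro exI[of _ "CARD('n)"] exI[of _ "\<lambda>_. z0"] exI[of _ hs]) simp
qed

end

section \<open>Behaviour along the imaginary axis\<close>

lemma tendsto_const_divide_at_top: "((\<lambda>y::real. c / y) \<longlongrightarrow> 0) at_top"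
  by (rule tendsto_divide_0[OF tendsto_const filterlim_at_top_imp_at_infinity[OF filterlim_ident]])

context transfer_function
begin

lemma M_W_iy:
  assumes y: "y > KB" and x: "x = W (\<i> * complex_of_real y) *v f"
  shows "\<i> * complex_of_real y \<in> holdom V" "M (\<i> * complex_of_real y) *v x = f"
    "V (\<i> * complex_of_real y) *v f = - x"
proof -
  show iy: "\<i> * complex_of_real y \<in> holdom V"
    using y KB_pos det_M_nonzero[of "\<i> * complex_of_real y"] by (simp add: holdom_eq)
  show "M (\<i> * complex_of_real y) *v x = f"
    using iy by (simp add: x matrix_vector_mul_assoc M_mult_W holdom_eq)
  show "V (\<i> * complex_of_real y) *v f = - x"
    by (simp add: x V_eq matrix_vector_mult_minus_lhs)
qed

lemma y_norm_resolvent_iy_le: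
  assumes "y > 0"
  shows "y * norm (R (\<i> * complex_of_real y) (Bs x)) \<le> KB * norm x"
  using norm_resolvent_Bs_le[of "\<i> * complex_of_real y" x] assms by (simp add: field_simps)

lemma norm_W_iy_le:
  assumes y: "y \<ge> 2 * KB + 1" and x: "x = W (\<i> * complex_of_real y) *v f"
  shows "norm x \<le> 2 * norm f / y"
proof -
  define z where "z = \<i> * complex_of_real y"
  have y0: "y > 0" "y > KB" using y KB_pos by auto
  have Mx: "M z *v x = f" using M_W_iy(2)[OF y0(2) x] by (simp add: z_def)
  \<comment> \<open>compare the imaginary parts of (M z x, x) = (f, x)\<close>
  have "Im z = y" by (simp add: z_def)
  then have "y * ((norm x)\<^sup>2 - (norm (R z (Bs x)))\<^sup>2) = - Im (ninner f x)"
    using Im_ninner_M[of z x] y0 by (simp add: Mx algebra_simps)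
  also have "\<dots> \<le> norm f * norm x"
    using abs_Im_le_cmod[of "ninner f x"] ninner_cauchy_schwarz[of f x] by linarith
  finally have A: "y * ((norm x)\<^sup>2 - (norm (R z (Bs x)))\<^sup>2) \<le> norm f * norm x" .
  have "y * norm (R z (Bs x)) \<le> KB * norm x"
    unfolding z_def by (rule y_norm_resolvent_iy_le[OF y0(1)])
  moreover have "2 * KB * norm x \<le> y * norm x" using y by (intro mult_right_mono) auto
  ultimately have "y * (2 * norm (R z (Bs x))) \<le> y * norm x" by linarith
  then have "norm (R z (Bs x)) \<le> norm x / 2" using y0 by simp
  then have "(norm (R z (Bs x)))\<^sup>2 \<le> (norm x)\<^sup>2 / 4"
    using power_mono[of _ "norm x / 2" 2] by (simp add: power_divide)
  then have "y * (3 / 4 * (norm x)\<^sup>2) \<le> y * ((norm x)\<^sup>2 - (norm (R z (Bs x)))\<^sup>2)"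
    using y0 by (intro mult_left_mono) auto
  then have "y * (3 / 4 * (norm x)\<^sup>2) \<le> norm f * norm x" using A by linarith
  then have "y * (3 * norm x) \<le> 4 * norm f"
    by (cases "x = 0") (auto simp: power2_eq_square mult_le_cancel_right)
  moreover have "0 \<le> y * norm x" using y0 by simp
  ultimately have "y * norm x \<le> 2 * norm f" by linarith
  then show ?thesis using y0 by (simp add: field_simps mult.commute)
qed

lemma y_Im_ninner_V_iy:
  assumes y: "y > KB" and x: "x = W (\<i> * complex_of_real y) *v f"
  shows "y * Im (ninner (V (\<i> * complex_of_real y) *v f) f)
    = (y * norm (R (\<i> * complex_of_real y) (Bs x)))\<^sup>2 - (y * norm x)\<^sup>2"
proof -
  define z where "z = \<i> * complex_of_real y"
  have z: "Im z = y" "Im z \<noteq> 0" using y KB_pos by (simp_all add: z_def)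
  have "ninner (V z *v f) f = - cnj (ninner (M z *v x) x)"
    using M_W_iy[OF y x] by (simp add: z_def ninner_minus_left ninner_commute[of x])
  then have Im_V: "Im (ninner (V z *v f) f) = y * ((norm (R z (Bs x)))\<^sup>2 - (norm x)\<^sup>2)"
    using Im_ninner_M[OF z(2), of x] by (simp add: z(1))
  show ?thesis
    unfolding z_def[symmetric] Im_V by (simp add: power_mult_distrib power2_eq_square algebra_simps)
qed

lemma abs_y_norm_W_iy_diff_le:
  assumes y: "y \<ge> 1" "y > KB" and x: "x = W (\<i> * complex_of_real y) *v f"
  shows "\<bar>y * norm x - norm f\<bar> \<le> (onorm ((*v) D) + KB\<^sup>2) * norm x"
proof -
  define z where "z = \<i> * complex_of_real y"
  have z0: "Im z \<noteq> 0" using y by (simp add: z_def)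
  \<comment> \<open>f = M z x = D x + B R(z) B* x - z x, and z x is the dominant term\<close>
  have "z *s x = (D *v x + B (R z (Bs x))) - f"
    using M_W_iy(2)[OF y(2) x] M_mult[OF z0, of x] by (simp add: z_def algebra_simps)
  moreover have "norm (z *s x) = y * norm x" using y
    by (simp add: z_def norm_vector_smult norm_mult)
  ultimately have "\<bar>y * norm x - norm f\<bar> \<le> norm (D *v x + B (R z (Bs x)))"
    using norm_triangle_ineq3[of "(D *v x + B (R z (Bs x))) - f" "- f"] by simp
  also have "\<dots> \<le> onorm ((*v) D) * norm x + KB * norm (R z (Bs x))"
    using onorm[OF matrix_vector_mul_bounded_linear[of D], of x] norm_B_le[of "R z (Bs x)"]
      norm_triangle_ineq[of "D *v x" "B (R z (Bs x))"] by linarith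
  also have "KB * norm (R z (Bs x)) \<le> KB\<^sup>2 * norm x"
  proof -
    have "norm (R z (Bs x)) \<le> y * norm (R z (Bs x))"
      using y(1) mult_right_mono[of 1 y "norm (R z (Bs x))"] by simp
    also have "\<dots> \<le> KB * norm x" unfolding z_def using y by (intro y_norm_resolvent_iy_le) simp
    finally have "norm (R z (Bs x)) \<le> KB * norm x" .
    then show ?thesis using KB_pos by (simp add: power2_eq_square mult.assoc mult_left_mono)
  qed
  finally show ?thesis by (simp add: algebra_simps)
qed

lemma tendsto_V_iy: "((\<lambda>y. V (\<i> * complex_of_real y) *v f) \<longlongrightarrow> 0) at_top"
proof (rule Lim_null_comparison)
  show "eventually (\<lambda>y. norm (V (\<i> * complex_of_real y) *v f) \<le> 2 * norm f / y) at_top"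
    using eventually_ge_at_top[of "2 * KB + 1"]
  proof (rule eventually_mono)
    fix y :: real assume y: "y \<ge> 2 * KB + 1"
    then have "y > KB" using KB_pos by simp
    then show "norm (V (\<i> * complex_of_real y) *v f) \<le> 2 * norm f / y"
      using M_W_iy(3)[OF _ refl] norm_W_iy_le[OF y refl] by simp
  qed
qed (rule tendsto_const_divide_at_top)

lemma tendsto_ninner_V_iy_divide:
  "((\<lambda>y. ninner (V (\<i> * complex_of_real y) *v f) f / complex_of_real y) \<longlongrightarrow> 0) at_top"
proof (rule tendsto_divide_0[OF _ filterlim_of_real_at_infinity])
  show "((\<lambda>y. ninner (V (\<i> * complex_of_real y) *v f) f) \<longlongrightarrow> 0) at_top"
    using tendsto_V_iy[of f] unfolding ninner_def
    by (auto intro!: tendsto_null_sum tendsto_mult_left_zero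
        tendsto_vec_nth[where a = 0, simplified])
qed

lemma tendsto_y_Im_ninner_V_iy:
  "((\<lambda>y. y * Im (ninner (V (\<i> * complex_of_real y) *v f) f)) \<longlongrightarrow> - (norm f)\<^sup>2) at_top"
proof -
  \<comment> \<open>with x = W(iy) f, y norm x tends to norm f and y norm (R(iy) B* x) tends to 0\<close>
  define x where "x y = W (\<i> * complex_of_real y) *v f" for y
  define g where "g y = y * norm (x y)" for y
  define h where "h y = y * norm (R (\<i> * complex_of_real y) (Bs (x y)))" for y
  define C where "C = onorm ((*v) D) + KB\<^sup>2"
  have C: "C \<ge> 0" using onorm_pos_le[OF matrix_vector_mul_bounded_linear[of D]] by (simp add: C_def)
  have large: "eventually (\<lambda>y. y \<ge> 2 * KB + 1) at_top" by (rule eventually_ge_at_top)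
  have "((\<lambda>y. g y - norm f) \<longlongrightarrow> 0) at_top"
  proof (rule Lim_null_comparison)
    show "eventually (\<lambda>y. norm (g y - norm f) \<le> C * (2 * norm f) / y) at_top"
      using large
    proof (rule eventually_mono)
      fix y :: real assume y: "y \<ge> 2 * KB + 1"
      have "norm (g y - norm f) \<le> C * norm (x y)"
        using abs_y_norm_W_iy_diff_le[of y "x y" f] y KB_pos by (simp add: g_def x_def C_def)
      also have "\<dots> \<le> C * (2 * norm f / y)"
        using norm_W_iy_le[OF y, of "x y" f] C by (intro mult_left_mono) (simp_all add: x_def)
      finally show "norm (g y - norm f) \<le> C * (2 * norm f) / y" by simp
    qed
  qed (rule tendsto_const_divide_at_top)
  then have g: "(g \<longlongrightarrow> norm f) at_top" by (simp add: LIM_zero_iff)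
  have h: "(h \<longlongrightarrow> 0) at_top"
  proof (rule Lim_null_comparison)
    show "eventually (\<lambda>y. norm (h y) \<le> KB * (2 * norm f) / y) at_top"
      using large
    proof (rule eventually_mono)
      fix y :: real assume y: "y \<ge> 2 * KB + 1"
      then have "y > 0" using KB_pos by simp
      then have "norm (h y) \<le> KB * norm (x y)"
        using y_norm_resolvent_iy_le[of y "x y"] by (simp add: h_def)
      also have "\<dots> \<le> KB * (2 * norm f / y)"
        using norm_W_iy_le[OF y, of "x y" f] KB_pos by (intro mult_left_mono) (simp_all add: x_def)
      finally show "norm (h y) \<le> KB * (2 * norm f) / y" by simp
    qed
  qed (rule tendsto_const_divide_at_top)
  have "((\<lambda>y. (h y)\<^sup>2 - (g y)\<^sup>2) \<longlongrightarrow> 0\<^sup>2 - (norm f)\<^sup>2) at_top"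
    by (intro tendsto_intros h g)
  moreover have "eventually (\<lambda>y. (h y)\<^sup>2 - (g y)\<^sup>2 =
      y * Im (ninner (V (\<i> * complex_of_real y) *v f) f)) at_top"
    using large
  proof (rule eventually_mono)
    fix y :: real assume "y \<ge> 2 * KB + 1"
    then have "y > KB" using KB_pos by simp
    then show "(h y)\<^sup>2 - (g y)\<^sup>2 = y * Im (ninner (V (\<i> * complex_of_real y) *v f) f)"
      using y_Im_ninner_V_iy[of y "x y" f] by (simp add: g_def h_def x_def)
  qed
  ultimately show ?thesis by (simp add: Lim_transform_eventually)
qed

lemma E_kernel_trivial:
  assumes z: "Im z \<noteq> 0" and \<zeta>: "Im \<zeta> \<noteq> 0" and far: "KB\<^sup>2 < \<bar>Im \<zeta>\<bar> * \<bar>Im z\<bar>"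
    and g: "E \<zeta> z *v g = 0"
  shows "g = 0"
proof -
  \<comment> \<open>(g, g) = (R(conj zeta) B* g, R(conj z) B* g), and both factors are small\<close>
  have "(norm g)\<^sup>2 = Re (cinner (R (cnj \<zeta>) (Bs g)) (R (cnj z) (Bs g)))"
    using ninner_E[OF \<zeta> z, of g g] g by (simp add: ninner_self_Re[symmetric])
  also have "\<dots> \<le> norm (R (cnj \<zeta>) (Bs g)) * norm (R (cnj z) (Bs g))"
    using complex_Re_le_cmod cinner_cauchy_schwarz order_trans by blast
  also have "\<dots> \<le> (KB * norm g / \<bar>Im \<zeta>\<bar>) * (KB * norm g / \<bar>Im z\<bar>)"
    using norm_resolvent_Bs_le[of "cnj \<zeta>" g] norm_resolvent_Bs_le[of "cnj z" g] z \<zeta> KB_pos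
    by (intro mult_mono) auto
  also have "\<dots> = KB\<^sup>2 / (\<bar>Im \<zeta>\<bar> * \<bar>Im z\<bar>) * (norm g)\<^sup>2"
    by (simp add: power2_eq_square field_simps)
  finally have "(1 - KB\<^sup>2 / (\<bar>Im \<zeta>\<bar> * \<bar>Im z\<bar>)) * (norm g)\<^sup>2 \<le> 0"
    by (simp add: algebra_simps)
  moreover have "KB\<^sup>2 / (\<bar>Im \<zeta>\<bar> * \<bar>Im z\<bar>) < 1" using far z \<zeta> by simp
  ultimately show "g = 0" by (simp add: mult_le_0_iff)
qed

lemma NV_kernel_trivial:
  assumes z: "z \<in> holdom V" and h: "\<forall>\<zeta>\<in>holdom V. NV V \<zeta> z *v h = 0"
  shows "h = 0"
proof -
  have z0: "Im z \<noteq> 0" "det (M z) \<noteq> 0" using z by (simp_all add: holdom_eq)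
  define T where "T = KB\<^sup>2 / \<bar>Im z\<bar> + KB + 1"
  define \<zeta> where "\<zeta> = \<i> * complex_of_real T"
  have "T * \<bar>Im z\<bar> = KB\<^sup>2 + (KB + 1) * \<bar>Im z\<bar>" using z0(1) by (simp add: T_def field_simps)
  moreover have "(KB + 1) * \<bar>Im z\<bar> > 0" using KB_pos z0(1) by simp
  ultimately have T: "T > KB" "KB\<^sup>2 < T * \<bar>Im z\<bar>"
    using KB_pos by (simp_all add: T_def add_nonneg_pos)
  have \<zeta>0: "\<zeta> \<in> holdom V" "Im \<zeta> = T" "det (M \<zeta>) \<noteq> 0"
    using T(1) KB_pos det_M_nonzero[of \<zeta>] by (simp_all add: \<zeta>_def holdom_eq)
  define g where "g = cadj (W \<zeta>) *v h"
  have "NV V \<zeta> z *v h = 0" using h \<zeta>0(1) by blast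
  then have "W z *v (E \<zeta> z *v g) = 0"
    by (simp add: NV_eq[OF \<zeta>0(1) z] g_def matrix_vector_mul_assoc matrix_mul_assoc)
  then have "(M z ** W z) *v (E \<zeta> z *v g) = 0"
    by (simp flip: matrix_vector_mul_assoc)
  then have "E \<zeta> z *v g = 0" by (simp add: M_mult_W[OF z0(2)])
  moreover have "Im \<zeta> \<noteq> 0" "KB\<^sup>2 < \<bar>Im \<zeta>\<bar> * \<bar>Im z\<bar>"
    using \<zeta>0(2) T KB_pos by (simp_all add: abs_of_pos)
  ultimately have "g = 0" using E_kernel_trivial[OF z0(1)] by blast
  moreover have "cadj (M \<zeta>) ** cadj (W \<zeta>) = mat 1"
    using arg_cong[OF W_mult_M[OF \<zeta>0(3)], of cadj] by (simp add: cadj_mult cadj_mat)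
  then have "h = cadj (M \<zeta>) *v g" by (simp add: g_def matrix_vector_mul_assoc)
  ultimately show "h = 0" by simp
qed

lemma class_N_V: "class_N CARD('n) V"
  unfolding class_N_def
  using V_meromorphic holdom_cnj not_neg_squares_ge_Suc_card neg_squares_ge_card by blast

lemma class_N1R_V: "class_N1R CARD('n) V"
proof -
  have at_iinf: "at_iinf V \<le> at_top" unfolding at_iinf_def by (rule inf_le1)
  have "Bset V = UNIV"
    unfolding Bset_def using tendsto_mono[OF at_iinf tendsto_y_Im_ninner_V_iy] by blast
  moreover have "{h. \<forall>\<zeta>\<in>holdom V. NV V \<zeta> z *v h = 0} = {0}" if "z \<in> holdom V" for z
    using NV_kernel_trivial[OF that] by auto
  ultimately show ?thesis
    unfolding class_N1R_def class_NR_def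
    using class_N_V tendsto_mono[OF at_iinf tendsto_ninner_V_iy_divide]
      tendsto_mono[OF at_iinf tendsto_V_iy] by blast
qed

end

theorem theorem23:
  fixes DA :: "'h::chilbert set" and A0 :: "'h \<Rightarrow> 'h"
    and B :: "'h \<Rightarrow> complex^'n" and Bs :: "complex^'n \<Rightarrow> 'h"
    and D :: "complex^'n^'n"
  assumes "selfadjoint DA A0"
    and "bounded_op B"
    and "is_adjoint B Bs"
    and "cadj D = D"
  shows "class_N1R CARD('n) (transfer_fun DA A0 B Bs D)"
proof -
  interpret transfer_function DA A0 B Bs D
    using assms by unfold_locales
  show ?thesis by (rule class_N1R_V)
qed

end
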